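(* Let $Q$ be a non-empty quasi-order. The quasi-orders $(\mathsf{T_f}(Q),\le_T)$ and $(i^F_{\omega^\omega}(Q),\preceq)$ are equivalent. That is, there are maps $f:\mathsf{T_f}(Q)\to i^F_{\omega^\omega}(Q)$ and $g: i^F_{\omega^\omega}(Q)\to\mathsf{T_f}(Q)$ with the following properties: - both are order-embeddings, i.e. $x\le y\iff f(x)\le f(y)$, and likewise for $g$; - $g(f(\tau))\equiv\tau$ for all $\tau\in\mathsf{T_f}(Q)$; - $f(g(\sigma))\equiv\sigma$ for all $\sigma\in i^F_{\omega^\omega}(Q)$. Here $a\equiv b$ means $a\le b$ and $b\le a$.
   Context: A quasi-order is a set with a reflexive, transitive relation. Trees: $\mathsf{T_f}(Q)$ is the smallest class containing the leaf $\cdot q$ for each $q\in Q$, and containing $\cdot(\tau_0,\dots,\tau_{k-1})$ (an unlabelled root whose children are the $\tau_i$) for every finite set $\{\tau_0,\dots,\tau_{k-1}\}\subseteq\mathsf{T_f}(Q)$ with $k\ge1$. Its order $\le_T$ is defined recursively: - $\cdot x\le_T\cdot y$ iff $x\le_Q y$; - $\cdot x\le_T\cdot(\tau_j)_{j<l}$ iff $\cdot x\le_T\tau_j$ for some $j$; - $\cdot(\sigma_i)_{i<k}\le_T\cdot(\tau_j)_{j<l}$ iff every $\sigma_i$ is $\le_T$ some $\tau_j$; - a non-leaf tree is never $\le_T$ a leaf. Sequences: a transfinite sequence over $Q$ of length $\alpha$ (with $\alpha\neq0$ an ordinal) is a function $\sigma:\alpha\to Q$, and $|\sigma|=\alpha$.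 Define $\sigma\preceq\tau$ if there is a strictly increasing $f:|\sigma|\to|\tau|$ with $\sigma(i)\le_Q\tau(f(i))$ for all $i$. Finite range means the sequence takes finitely many values. A proper tail of $\sigma$ is $i\mapsto\sigma(\delta+i)$ for some $0<\delta<|\sigma|$. The sequence $\sigma$ is indecomposable if it embeds into each of its proper tails. $i^F_{\omega^\omega}(Q)$ is the set of indecomposable finite-range sequences over $Q$ of length $<\omega^\omega$, ordered by $\preceq$. *)

theory Defs
  imports "HOL-Library.FSet" "HOL-Library.Multiset_Order" "HOL-Library.FuncSet"
begin

datatype 'q tree = Leaf 'q | Node "'q tree fset"

inductive tree_in :: "'q set \<Rightarrow> 'q tree \<Rightarrow> bool" for Q where
  leaf_in: "q \<in> Q \<Longrightarrow> tree_in Q (Leaf q)"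
| node_in: "ts \<noteq> {||} \<Longrightarrow> (\<forall>t. t |\<in>| ts \<longrightarrow> tree_in Q t) \<Longrightarrow> tree_in Q (Node ts)"

definition Tf :: "'q set \<Rightarrow> 'q tree set" where
  "Tf Q = {t. tree_in Q t}"

inductive tree_le :: "('q \<Rightarrow> 'q \<Rightarrow> bool) \<Rightarrow> 'q tree \<Rightarrow> 'q tree \<Rightarrow> bool" for le where
  leaf_leaf: "le x y \<Longrightarrow> tree_le le (Leaf x) (Leaf y)"
| leaf_node: "t |\<in>| ts \<Longrightarrow> tree_le le (Leaf x) t \<Longrightarrow> tree_le le (Leaf x) (Node ts)"
| node_node: "(\<forall>s. s |\<in>| ss \<longrightarrow> (\<exists>t. t |\<in>| ts \<and> tree_le le s t))
              \<Longrightarrow> tree_le le (Node ss) (Node ts)"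

text \<open>Ordinals below omega^omega are represented by finite multisets of naturals
under the multiset order: the multiset {k1,...,kn} stands for the Cantor normal
form omega^k1 + ... + omega^kn (k1 >= ... >= kn), and the multiset order coincides
with the ordinal order. The empty multiset is the ordinal 0; the ordinal alpha is
the set of ordinals {..<alpha}.

A sequence is a pair (alpha, s) with s an extensional function on {..<alpha}.\<close>

type_synonym 'q tseq = "nat multiset \<times> (nat multiset \<Rightarrow> 'q)"

definition seq_len :: "'q tseq \<Rightarrow> nat multiset" where
  "seq_len s = fst s"

definition seq_fun :: "'q tseq \<Rightarrow> nat multiset \<Rightarrow> 'q" where
  "seq_fun s = snd s"

definition seq_le :: "('q \<Rightarrow> 'q \<Rightarrow> bool) \<Rightarrow> 'q tseq \<Rightarrow> 'q tseq \<Rightarrow> bool" where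
  "seq_le le s t \<longleftrightarrow>
     (\<exists>f. strict_mono_on {..<seq_len s} f \<and> f ` {..<seq_len s} \<subseteq> {..<seq_len t} \<and>
          (\<forall>i \<in> {..<seq_len s}. le (seq_fun s i) (seq_fun t (f i))))"

text \<open>Indecomposable: sigma embeds into each proper tail i |-> sigma(delta + i),
0 < delta < |sigma|. Since i |-> delta + i is an order isomorphism from the length
of the tail onto the interval [delta, |sigma|), this is expressed as an embedding
of sigma into sigma restricted to {delta..<|sigma|}.\<close>
definition indecomposable :: "('q \<Rightarrow> 'q \<Rightarrow> bool) \<Rightarrow> 'q tseq \<Rightarrow> bool" where
  "indecomposable le s \<longleftrightarrow>
     (\<forall>d. {#} < d \<and> d < seq_len s \<longrightarrow>
        (\<exists>f. strict_mono_on {..<seq_len s} f \<and> f ` {..<seq_len s} \<subseteq> {d..<seq_len s} \<and>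
             (\<forall>i \<in> {..<seq_len s}. le (seq_fun s i) (seq_fun s (f i)))))"

definition iF :: "'q set \<Rightarrow> ('q \<Rightarrow> 'q \<Rightarrow> bool) \<Rightarrow> 'q tseq set" where
  "iF Q le = {s. seq_len s \<noteq> {#} \<and> seq_fun s \<in> {..<seq_len s} \<rightarrow>\<^sub>E Q \<and>
                 finite (seq_fun s ` {..<seq_len s}) \<and> indecomposable le s}"

end

theory Submission
  imports Defs "HOL-Library.Infinite_Set"
begin

text \<open>Ordinals below \<open>\<omega>^\<omega>\<close> are finite multisets of naturals, \<open>\<omega>^h\<close> being the multisets with all
  elements below \<open>h\<close>, and an indecomposable sequence always has length \<open>\<omega>^h\<close>. A leaf labelled
  \<open>q\<close> becomes the sequence \<open>q\<close> of length 1; a node whose children give sequences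
  \<open>\<sigma>_0, \<dots>, \<sigma>_(m-1)\<close> of lengths at most \<open>\<omega>^H\<close> becomes the sequence of length \<open>\<omega>^(H+1)\<close>
  whose \<open>n\<close>-th block of length \<open>\<omega>^H\<close> is \<open>\<sigma>_(n mod m)\<close> padded with a highest child. These
  sequences are periodic, hence indecomposable, and indecomposable sequences are prime for
  concatenation; so an embedding between two node sequences sends each child into a single
  child, which makes the map an order embedding.

  Conversely, let \<open>\<rho>\<close> be indecomposable of length \<open>\<omega>^(h+1)\<close> with finite range \<open>R\<close>. By
  induction on \<open>h\<close>, each block of \<open>\<rho>\<close> lies below the concatenation of finitely many trees of
  height at most \<open>h\<close> labelled in \<open>R\<close>, each below the block. There are only finitely many
  such trees, so from some block on only trees used for infinitely many blocks occur. The node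
  with these children is below \<open>\<rho>\<close>, lies above \<open>\<rho>\<close> from that block on, and by
  indecomposability \<open>\<rho>\<close> embeds into this tail.\<close>

section \<open>Ordinals below \<open>\<omega>^\<omega>\<close>\<close>

definition omega_pow :: "nat \<Rightarrow> nat multiset set" where
  "omega_pow h = {x. \<forall>y\<in>#x. y < h}"

lemma lessThan_single_mset: "{..<{#h#}} = omega_pow h"
  by (auto simp: omega_pow_def)

lemma omega_pow_0: "omega_pow 0 = {{#}}"
  by (auto simp: omega_pow_def)

lemma empty_in_omega_pow [simp]: "{#} \<in> omega_pow k"
  by (simp add: omega_pow_def)

lemma omega_pow_mono: "h \<le> k \<Longrightarrow> omega_pow h \<subseteq> omega_pow k"
  by (auto simp: omega_pow_def)

lemma less_if_notin_omega_pow: "r \<notin> omega_pow h \<Longrightarrow> r' \<in> omega_pow h \<Longrightarrow> r' < r"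
  using lessThan_single_mset[of h] by (metis lessThan_iff not_less order_less_le_trans)

lemma replicate_mset_add: "replicate_mset (a + b) k = replicate_mset a k + replicate_mset b k"
  by (rule multiset_eqI) simp

lemma replicate_mset_add_less:
  assumes "a < b" and "A \<in> omega_pow k"
  shows "replicate_mset a k + A < replicate_mset b k + B"
proof -
  obtain c where b: "b = a + Suc c" using \<open>a < b\<close> by (auto dest!: less_imp_Suc_add)
  have "A < {#k#}" using \<open>A \<in> omega_pow k\<close> by (auto simp: omega_pow_def)
  also have "{#k#} \<le> replicate_mset (Suc c) k + B" by simp
  finally have "replicate_mset a k + A < replicate_mset a k + (replicate_mset (Suc c) k + B)"
    by simp
  then show ?thesis unfolding b replicate_mset_add by (simp add: add.assoc)
qed

lemma replicate_mset_add_less_iff: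
  assumes "A \<in> omega_pow k" "B \<in> omega_pow k"
  shows "replicate_mset a k + A < replicate_mset b k + B \<longleftrightarrow> a < b \<or> a = b \<and> A < B"
  using replicate_mset_add_less[OF _ assms(1), of a b B] replicate_mset_add_less[OF _ assms(2), of b a A]
  by (cases a b rule: linorder_cases) auto

lemma replicate_mset_add_le_iff:
  assumes "A \<in> omega_pow k" "B \<in> omega_pow k"
  shows "replicate_mset a k + A \<le> replicate_mset b k + B \<longleftrightarrow> a < b \<or> a = b \<and> A \<le> B"
  using replicate_mset_add_less_iff[OF assms(2,1), of b a] by (auto simp: not_less[symmetric])

definition shift :: "nat \<Rightarrow> nat \<Rightarrow> nat multiset \<Rightarrow> nat multiset" where
  "shift n k r = replicate_mset n k + r"

lemma omega_pow_Suc_decomp: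
  assumes "x \<in> omega_pow (Suc k)"
  shows "x = shift (count x k) k (filter_mset (\<lambda>y. y < k) x)"
    and "filter_mset (\<lambda>y. y < k) x \<in> omega_pow k"
proof -
  show "filter_mset (\<lambda>y. y < k) x \<in> omega_pow k" by (auto simp: omega_pow_def)
  show "x = shift (count x k) k (filter_mset (\<lambda>y. y < k) x)"
  proof (rule multiset_eqI)
    fix y
    show "count x y = count (shift (count x k) k (filter_mset (\<lambda>y. y < k) x)) y"
      using assms by (cases "y < k") (auto simp: shift_def omega_pow_def not_less_eq_eq count_eq_zero_iff)
  qed
qed

lemma count_shift: "r \<in> omega_pow k \<Longrightarrow> count (shift n k r) k = n"
  by (auto simp: shift_def omega_pow_def count_eq_zero_iff)

lemma filter_shift: "r \<in> omega_pow k \<Longrightarrow> filter_mset (\<lambda>y. y < k) (shift n k r) = r"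
  by (rule multiset_eqI) (auto simp: shift_def omega_pow_def count_eq_zero_iff)

lemma shift_in_omega_pow_Suc: "r \<in> omega_pow k \<Longrightarrow> shift n k r \<in> omega_pow (Suc k)"
  by (auto simp: shift_def omega_pow_def)

lemma shift_less_iff: "shift n k r < shift n k r' \<longleftrightarrow> r < r'"
  by (simp add: shift_def)

lemma strict_mono_on_shift: "strict_mono_on D (shift n k)"
  by (auto simp: strict_mono_on_def shift_less_iff)

text \<open>\<^term>\<open>shift n k r\<close> is the ordinal \<open>\<omega>^k\<cdot>n + r\<close>, and \<^term>\<open>block k n\<close> the interval
  \<open>[\<omega>^k\<cdot>n, \<omega>^k\<cdot>(n+1))\<close>, the \<open>n\<close>-th block of \<open>\<omega>^(k+1)\<close>.\<close>

definition block :: "nat \<Rightarrow> nat \<Rightarrow> nat multiset set" where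
  "block k n = shift n k ` omega_pow k"

lemma block_less: "n < n' \<Longrightarrow> x \<in> block k n \<Longrightarrow> y \<in> block k n' \<Longrightarrow> x < y"
  by (auto simp: block_def shift_def replicate_mset_add_less_iff)

lemma omega_pow_Suc_eq_UN_block: "omega_pow (Suc k) = (\<Union>n. block k n)"
  unfolding block_def using omega_pow_Suc_decomp shift_in_omega_pow_Suc by blast

lemma block_subset_omega_pow_Suc: "block k n \<subseteq> omega_pow (Suc k)"
  using omega_pow_Suc_eq_UN_block by blast

section \<open>Embeddings between restrictions of sequences\<close>

definition embeds :: "('q \<Rightarrow> 'q \<Rightarrow> bool) \<Rightarrow> (nat multiset \<Rightarrow> 'q) \<Rightarrow> nat multiset set
    \<Rightarrow> (nat multiset \<Rightarrow> 'q) \<Rightarrow> nat multiset set \<Rightarrow> bool" where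
  "embeds le \<sigma> D \<tau> S \<longleftrightarrow> (\<exists>e. strict_mono_on D e \<and> e ` D \<subseteq> S \<and> (\<forall>i\<in>D. le (\<sigma> i) (\<tau> (e i))))"

lemma embedsI:
  "strict_mono_on D e \<Longrightarrow> e ` D \<subseteq> S \<Longrightarrow> (\<forall>x\<in>D. le (\<sigma> x) (\<tau> (e x))) \<Longrightarrow> embeds le \<sigma> D \<tau> S"
  unfolding embeds_def by blast

lemma embeds_empty [simp]: "embeds le \<sigma> {} \<tau> S"
  unfolding embeds_def by (auto simp: strict_mono_on_def)

lemma embeds_mono: "embeds le \<sigma> D \<tau> S \<Longrightarrow> D' \<subseteq> D \<Longrightarrow> S \<subseteq> S' \<Longrightarrow> embeds le \<sigma> D' \<tau> S'"
  unfolding embeds_def strict_mono_on_def by (metis (no_types, lifting) image_mono order_trans subsetD)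

lemma embeds_cong:
  assumes "\<And>x. x \<in> D \<Longrightarrow> \<sigma> x = \<sigma>' x" and "\<And>x. x \<in> S \<Longrightarrow> \<tau> x = \<tau>' x"
  shows "embeds le \<sigma> D \<tau> S = embeds le \<sigma>' D \<tau>' S"
  unfolding embeds_def using assms by (auto simp: image_subset_iff)

lemma embeds_inv_image:
  fixes \<phi> :: "nat multiset \<Rightarrow> nat multiset"
  assumes sm: "strict_mono_on D \<phi>" and "D \<subseteq> S" and le: "\<forall>x\<in>D. le (\<sigma> (\<phi> x)) (\<tau> x)"
  shows "embeds le \<sigma> (\<phi> ` D) \<tau> S"
proof (rule embedsI)
  have inj: "inj_on \<phi> D" using sm strict_mono_on_imp_inj_on by blast
  show "strict_mono_on (\<phi> ` D) (inv_into D \<phi>)"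
  proof (rule strict_mono_onI)
    fix a b assume "a \<in> \<phi> ` D" "b \<in> \<phi> ` D" "a < b"
    then show "inv_into D \<phi> a < inv_into D \<phi> b"
      using inj strict_mono_on_less[OF sm] by auto
  qed
  show "inv_into D \<phi> ` \<phi> ` D \<subseteq> S" using inj \<open>D \<subseteq> S\<close> by auto
  show "\<forall>x\<in>\<phi> ` D. le (\<sigma> x) (\<tau> (inv_into D \<phi> x))" using inj le by auto
qed

lemma embeds_UN:
  fixes D S :: "nat \<Rightarrow> nat multiset set"
  assumes D_ord: "\<And>i j x y. i < j \<Longrightarrow> x \<in> D i \<Longrightarrow> y \<in> D j \<Longrightarrow> x < y"
    and S_ord: "\<And>i j x y. i < j \<Longrightarrow> x \<in> S i \<Longrightarrow> y \<in> S j \<Longrightarrow> x < y"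
    and emb: "\<And>i. embeds le \<sigma> (D i) \<tau> (S i)"
  shows "embeds le \<sigma> (\<Union>i. D i) \<tau> (\<Union>i. S i)"
proof -
  obtain e where e: "\<And>i. strict_mono_on (D i) (e i)" "\<And>i. e i ` D i \<subseteq> S i"
     "\<And>i x. x \<in> D i \<Longrightarrow> le (\<sigma> x) (\<tau> (e i x))"
    using emb unfolding embeds_def by metis
  have uniq: "i = j" if "x \<in> D i" "x \<in> D j" for x i j
    using D_ord[of i j x x] D_ord[of j i x x] that by (metis less_irrefl linorder_neqE_nat)
  define idx where "idx x = (SOME i. x \<in> D i)" for x
  have idx: "idx x = i" if "x \<in> D i" for x i
    unfolding idx_def by (rule someI2[of _ i]) (use that uniq in auto)
  define E where "E x = e (idx x) x" for x
  show ?thesis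
  proof (rule embedsI)
    show "strict_mono_on (\<Union>i. D i) E"
    proof (rule strict_mono_onI)
      fix x y assume "x \<in> (\<Union>i. D i)" "y \<in> (\<Union>i. D i)" "x < y"
      then obtain i j where ij: "x \<in> D i" "y \<in> D j" "x < y" by auto
      show "E x < E y"
      proof (cases i j rule: linorder_cases)
        case less
        have "e i x \<in> S i" "e j y \<in> S j" using e(2) ij by auto
        then show ?thesis using S_ord[OF less] ij unfolding E_def by (simp add: idx)
      next
        case equal
        then show ?thesis using e(1)[of i] ij unfolding E_def strict_mono_on_def by (auto simp: idx)
      next
        case greater
        then show ?thesis using D_ord[OF greater ij(2,1)] ij(3) by auto
      qed
    qed
    show "E ` (\<Union>i. D i) \<subseteq> (\<Union>i. S i)" using e(2) by (fastforce simp: E_def idx)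
    show "\<forall>x\<in>(\<Union>i. D i). le (\<sigma> x) (\<tau> (E x))" using e(3) by (auto simp: E_def idx)
  qed
qed

lemma embeds_Un:
  assumes "\<And>x y. x \<in> D1 \<Longrightarrow> y \<in> D2 \<Longrightarrow> x < y" "\<And>x y. x \<in> S1 \<Longrightarrow> y \<in> S2 \<Longrightarrow> x < y"
    and "embeds le \<sigma> D1 \<tau> S1" "embeds le \<sigma> D2 \<tau> S2"
  shows "embeds le \<sigma> (D1 \<union> D2) \<tau> (S1 \<union> S2)"
proof -
  define D where "D i = (if i = 0 then D1 else if i = 1 then D2 else {})" for i :: nat
  define S where "S i = (if i = 0 then S1 else if i = 1 then S2 else {})" for i :: nat
  have "embeds le \<sigma> (\<Union>i. D i) \<tau> (\<Union>i. S i)"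
    by (rule embeds_UN) (use assms in \<open>auto simp: D_def S_def split: if_splits\<close>)
  moreover have "(\<Union>i. D i) = D1 \<union> D2" "(\<Union>i. S i) = S1 \<union> S2"
    by (auto simp: D_def S_def split: if_splits)
  ultimately show ?thesis by simp
qed

lemma embeds_omega_pow_0_iff:
  "embeds le \<sigma> (omega_pow 0) \<tau> (omega_pow 0) \<longleftrightarrow> le (\<sigma> {#}) (\<tau> {#})"
proof
  assume "embeds le \<sigma> (omega_pow 0) \<tau> (omega_pow 0)"
  then show "le (\<sigma> {#}) (\<tau> {#})" unfolding embeds_def omega_pow_0 by auto
next
  assume "le (\<sigma> {#}) (\<tau> {#})"
  then show "embeds le \<sigma> (omega_pow 0) \<tau> (omega_pow 0)"
    by (intro embedsI[of _ id]) (auto simp: omega_pow_0 strict_mono_on_def)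
qed

lemma seq_le_eq_embeds:
  "seq_le le a b \<longleftrightarrow> embeds le (seq_fun a) {..<seq_len a} (seq_fun b) {..<seq_len b}"
  by (simp add: seq_le_def embeds_def)

lemma indecomposable_eq_embeds:
  "indecomposable le s \<longleftrightarrow>
    (\<forall>d. {#} < d \<and> d < seq_len s \<longrightarrow> embeds le (seq_fun s) {..<seq_len s} (seq_fun s) {d..<seq_len s})"
  by (simp add: indecomposable_def embeds_def)

lemma embeds_rel_cong:
  assumes "\<And>x y. x \<in> Q \<Longrightarrow> y \<in> Q \<Longrightarrow> le x y \<longleftrightarrow> le' x y" and "\<sigma> ` D \<subseteq> Q" "\<tau> ` S \<subseteq> Q"
  shows "embeds le \<sigma> D \<tau> S \<longleftrightarrow> embeds le' \<sigma> D \<tau> S"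
proof -
  have "(\<forall>i\<in>D. le (\<sigma> i) (\<tau> (e i))) \<longleftrightarrow> (\<forall>i\<in>D. le' (\<sigma> i) (\<tau> (e i)))" if "e ` D \<subseteq> S" for e
  proof -
    have "\<sigma> i \<in> Q" "\<tau> (e i) \<in> Q" if "i \<in> D" for i
      using assms(2,3) \<open>e ` D \<subseteq> S\<close> that by blast+
    then show ?thesis using assms(1) by simp
  qed
  then show ?thesis unfolding embeds_def by blast
qed

text \<open>The relation is required to vanish outside \<open>Q\<close>, so that it is transitive everywhere; the
  theorem reduces to this case by restricting \<open>le\<close> to \<open>Q\<close>.\<close>

locale qo_on =
  fixes Q :: "'q set" and le :: "'q \<Rightarrow> 'q \<Rightarrow> bool"
  assumes le_trans: "le x y \<Longrightarrow> le y z \<Longrightarrow> le x z"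
    and le_refl: "x \<in> Q \<Longrightarrow> le x x"
    and le_in: "le x y \<Longrightarrow> x \<in> Q \<and> y \<in> Q"
begin

lemma embeds_trans: "embeds le \<sigma> D \<tau> S \<Longrightarrow> embeds le \<tau> S \<upsilon> U \<Longrightarrow> embeds le \<sigma> D \<upsilon> U"
  unfolding embeds_def
proof (elim exE conjE)
  fix e1 e2 assume e1: "strict_mono_on D e1" "e1 ` D \<subseteq> S" "\<forall>i\<in>D. le (\<sigma> i) (\<tau> (e1 i))"
    and e2: "strict_mono_on S e2" "e2 ` S \<subseteq> U" "\<forall>i\<in>S. le (\<tau> i) (\<upsilon> (e2 i))"
  show "\<exists>e. strict_mono_on D e \<and> e ` D \<subseteq> U \<and> (\<forall>i\<in>D. le (\<sigma> i) (\<upsilon> (e i)))"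
  proof (intro exI[of _ "e2 \<circ> e1"] conjI)
    show "strict_mono_on D (e2 \<circ> e1)"
      using e1(1,2) e2(1) unfolding strict_mono_on_def by (simp add: image_subset_iff)
    show "(e2 \<circ> e1) ` D \<subseteq> U" using e1(2) e2(2) by auto
    show "\<forall>i\<in>D. le (\<sigma> i) (\<upsilon> ((e2 \<circ> e1) i))" using e1(2,3) e2(3) le_trans by fastforce
  qed
qed

lemma embeds_refl: "\<sigma> ` D \<subseteq> Q \<Longrightarrow> D \<subseteq> S \<Longrightarrow> embeds le \<sigma> D \<sigma> S"
  by (rule embedsI[of D id]) (auto simp: strict_mono_on_def le_refl)

end

section \<open>Indecomposable sequences\<close>

lemma indecomposable_single_iff:
  "indecomposable le ({#h#}, \<sigma>) \<longleftrightarrow>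
     (\<forall>d\<in>omega_pow h. d \<noteq> {#} \<longrightarrow> embeds le \<sigma> (omega_pow h) \<sigma> {x\<in>omega_pow h. d \<le> x})"
proof -
  have tail: "{d..<{#h#}} = {x\<in>omega_pow h. d \<le> x}" for d by (auto simp: omega_pow_def)
  have proper: "{#} < d \<and> d < {#h#} \<longleftrightarrow> d \<in> omega_pow h \<and> d \<noteq> {#}" for d
    by (auto simp: omega_pow_def)
  show ?thesis
    unfolding indecomposable_def seq_len_def seq_fun_def embeds_def fst_conv snd_conv
      tail proper lessThan_single_mset
    by blast
qed

lemma strict_mono_on_inflationary:
  fixes e :: "'a::wellorder \<Rightarrow> 'a"
  assumes sm: "strict_mono_on {..<M} e" and into: "e ` {..<M} \<subseteq> {..<M}"
  shows "x < M \<Longrightarrow> x \<le> e x"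
proof (induction x rule: less_induct)
  case (less x)
  show ?case
  proof (rule ccontr)
    assume "\<not> x \<le> e x"
    then have lt: "e x < x" by simp
    have ex: "e x < M" using into less.prems by auto
    have "e x \<le> e (e x)" using less.IH[OF lt ex] .
    moreover have "e (e x) < e x" using sm lt ex less.prems unfolding strict_mono_on_def by auto
    ultimately show False by simp
  qed
qed

lemma no_strict_mono_into_translate:
  fixes e :: "nat multiset \<Rightarrow> nat multiset"
  assumes sm: "strict_mono_on {..<M} e" and into: "e ` {..<M} \<subseteq> (+) d ` {..<W}" and "W < M"
  shows False
proof -
  define e' where "e' x = e x - d" for x
  have e: "e x = d + e' x \<and> e' x < W" if "x < M" for x
  proof -
    have "e x \<in> (+) d ` {..<W}" using that into by auto
    then obtain w where "e x = d + w" "w < W" by (auto simp: image_iff)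
    then show ?thesis unfolding e'_def by simp
  qed
  have "strict_mono_on {..<M} e'"
  proof (rule strict_mono_onI)
    fix x y assume x: "x \<in> {..<M}" and y: "y \<in> {..<M}" and "x < y"
    then have "e x < e y" by (rule strict_mono_onD[OF sm])
    then show "e' x < e' y" using e x y by (metis add_less_cancel_left lessThan_iff)
  qed
  moreover have "e' ` {..<M} \<subseteq> {..<M}"
  proof
    fix y assume "y \<in> e' ` {..<M}"
    then obtain x where "x < M" "y = e' x" by auto
    then show "y \<in> {..<M}" using e[of x] \<open>W < M\<close> by (metis lessThan_iff order.strict_trans)
  qed
  ultimately have "W \<le> e' W" using \<open>W < M\<close> by (rule strict_mono_on_inflationary)
  then show False using e \<open>W < M\<close> by (simp add: not_le[symmetric])
qed

lemma interval_replicate_mset_add: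
  assumes "W \<in> omega_pow k \<or> W = {#k#}"
  shows "{replicate_mset c k..<replicate_mset c k + W} \<subseteq> (+) (replicate_mset c k) ` {..<W}"
proof
  fix y assume y: "y \<in> {replicate_mset c k..<replicate_mset c k + W}"
  have "replicate_mset c k + W \<in> omega_pow (Suc k)" using assms by (auto simp: omega_pow_def)
  then have "y \<in> omega_pow (Suc k)"
    using y unfolding lessThan_single_mset[symmetric] by (metis atLeastLessThan_iff lessThan_iff order.strict_trans)
  then obtain r where r: "y = replicate_mset (count y k) k + r" "r \<in> omega_pow k"
    using omega_pow_Suc_decomp unfolding shift_def by metis
  have "replicate_mset c k + {#} \<le> replicate_mset (count y k) k + r" using y r(1) by simp
  then have c: "c \<le> count y k" unfolding replicate_mset_add_le_iff[OF empty_in_omega_pow r(2)] by auto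
  from assms have "count y k = c \<and> r < W"
  proof
    assume W: "W \<in> omega_pow k"
    have "replicate_mset (count y k) k + r < replicate_mset c k + W" using y r(1) by simp
    then show ?thesis using c unfolding replicate_mset_add_less_iff[OF r(2) W] by auto
  next
    assume W: "W = {#k#}"
    have "replicate_mset (count y k) k + r < replicate_mset (Suc c) k + {#}"
      using y r(1) W by (simp add: add.commute)
    then have "count y k < Suc c"
      unfolding replicate_mset_add_less_iff[OF r(2) empty_in_omega_pow] by simp
    moreover have "r < {#k#}" using r(2) by (metis lessThan_iff lessThan_single_mset)
    ultimately show ?thesis using c W by simp
  qed
  then show "y \<in> (+) (replicate_mset c k) ` {..<W}" using r(1) by auto
qed

text \<open>An ordinal \<open>\<alpha> < \<omega>^\<omega>\<close> that is neither \<open>0\<close> nor a power \<open>\<omega>^k\<close> is a sum \<open>\<delta> + \<beta>\<close> of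
  nonzero ordinals whose tail \<open>[\<delta>, \<alpha>)\<close> is a translate of \<open>\<beta>\<close>: write \<open>\<alpha> = \<omega>^k\<cdot>c + \<beta>\<close> with
  \<open>\<beta> < \<omega>^k\<close> and take \<open>\<delta> = \<omega>^k\<cdot>c\<close>, or \<open>\<delta> = \<omega>^k\<cdot>(c-1)\<close> and \<open>\<beta> = \<omega>^k\<close> if \<open>\<alpha> = \<omega>^k\<cdot>c\<close>.\<close>

lemma ex_tail_translate:
  fixes M :: "nat multiset"
  assumes "M \<noteq> {#}" and "\<nexists>k. M = {#k#}"
  obtains d W where "d \<noteq> {#}" "W \<noteq> {#}" "M = d + W" "{d..<M} \<subseteq> (+) d ` {..<W}"
proof -
  define k where "k = Max (set_mset M)"
  have "M \<in> omega_pow (Suc k)"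
    unfolding k_def omega_pow_def using assms(1) by (auto simp: less_Suc_eq_le)
  then obtain c R where M: "M = replicate_mset c k + R" and R: "R \<in> omega_pow k"
    using omega_pow_Suc_decomp unfolding shift_def by metis
  have "k \<in># M" unfolding k_def using assms(1) by simp
  then have "c \<noteq> 0" using M R by (auto simp: omega_pow_def split: if_splits)
  show ?thesis
  proof (cases "R = {#}")
    case False
    show ?thesis
    proof (rule that)
      show "{replicate_mset c k..<M} \<subseteq> (+) (replicate_mset c k) ` {..<R}"
        unfolding M using R by (rule interval_replicate_mset_add[OF disjI1])
    qed (use False M \<open>c \<noteq> 0\<close> in simp_all)
  next
    case True
    then have "c \<noteq> 1" using M assms(2) by auto
    then have M': "M = replicate_mset (c - 1) k + {#k#}" using \<open>c \<noteq> 0\<close> M True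
      by (metis add.right_neutral add_mset_add_single replicate_mset_Suc Suc_pred' not_gr_zero)
    show ?thesis
    proof (rule that)
      show "{replicate_mset (c - 1) k..<M} \<subseteq> (+) (replicate_mset (c - 1) k) ` {..<{#k#}}"
        unfolding M' by (rule interval_replicate_mset_add) simp
    qed (use M' \<open>c \<noteq> 0\<close> \<open>c \<noteq> 1\<close> in simp_all)
  qed
qed

lemma indecomposable_length_single:
  assumes ind: "indecomposable le (M, \<sigma>)" and "M \<noteq> {#}"
  shows "\<exists>k. M = {#k#}"
proof (rule ccontr)
  assume "\<nexists>k. M = {#k#}"
  then obtain d W where dW: "d \<noteq> {#}" "W \<noteq> {#}" "M = d + W" and tail: "{d..<M} \<subseteq> (+) d ` {..<W}"
    using ex_tail_translate \<open>M \<noteq> {#}\<close> by blast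
  have "{#} < d" "d < M" "W < M"
    using dW by (simp_all add: le_multiset_empty_left less_add_same_cancel1 less_add_same_cancel2)
  then obtain e where "strict_mono_on {..<M} e" "e ` {..<M} \<subseteq> {d..<M}"
    using ind unfolding indecomposable_def seq_len_def seq_fun_def by auto
  then show False using no_strict_mono_into_translate tail \<open>W < M\<close> by (meson order_trans)
qed

lemma periodic_replicate_mset_mult:
  assumes periodic: "\<And>x. x \<in> omega_pow (Suc H) \<Longrightarrow> \<rho> (replicate_mset m H + x) = \<rho> x"
    and x: "x \<in> omega_pow (Suc H)"
  shows "\<rho> (replicate_mset (m * j) H + x) = \<rho> x"
proof (induction j)
  case (Suc j)
  have "replicate_mset (m * j) H + x \<in> omega_pow (Suc H)"
    using x by (auto simp: omega_pow_def)
  then have "\<rho> (replicate_mset m H + (replicate_mset (m * j) H + x)) = \<rho> x"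
    using periodic Suc.IH by simp
  moreover have "replicate_mset m H + (replicate_mset (m * j) H + x) = replicate_mset (m * Suc j) H + x"
    by (simp add: replicate_mset_add add.assoc)
  ultimately show ?case by simp
qed simp

context qo_on
begin

text \<open>If the embedding leaves \<open>A\<close> at position \<open>i\<close>, precomposing it with an embedding into the
  tail from \<open>i\<close> lands in \<open>B\<close>.\<close>

lemma indecomposable_embeds_Un:
  assumes ind: "indecomposable le ({#h#}, \<rho>)" and emb: "embeds le \<rho> (omega_pow h) \<tau> (A \<union> B)"
    and AB: "\<And>x y. x \<in> A \<Longrightarrow> y \<in> B \<Longrightarrow> x < y"
  shows "embeds le \<rho> (omega_pow h) \<tau> A \<or> embeds le \<rho> (omega_pow h) \<tau> B"
proof -
  obtain e where e: "strict_mono_on (omega_pow h) e" "e ` omega_pow h \<subseteq> A \<union> B"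
    "\<forall>i\<in>omega_pow h. le (\<rho> i) (\<tau> (e i))"
    using emb unfolding embeds_def by blast
  show ?thesis
  proof (cases "\<forall>x\<in>omega_pow h. e x \<in> A")
    case True
    then show ?thesis using e unfolding embeds_def by blast
  next
    case False
    then obtain x0 where x0: "x0 \<in> omega_pow h" "e x0 \<in> B" using e(2) by blast
    define i where "i = (LEAST x. x \<in> omega_pow h \<and> e x \<in> B)"
    have i: "i \<in> omega_pow h" "e i \<in> B"
      unfolding i_def using LeastI[of "\<lambda>x. x \<in> omega_pow h \<and> e x \<in> B", OF conjI[OF x0]] by auto
    have to_B: "e y \<in> B" if "y \<in> omega_pow h" "i \<le> y" for y
    proof -
      have "e i \<le> e y" using strict_mono_on_leD[OF e(1) i(1) that] .
      moreover have "e y \<in> A \<union> B" using e(2) that(1) by blast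
      ultimately show ?thesis using AB[of "e y" "e i"] i(2) by auto
    qed
    have "embeds le \<rho> {x\<in>omega_pow h. i \<le> x} \<tau> B"
      by (rule embedsI[of _ e]) (use e to_B in \<open>auto simp: strict_mono_on_def\<close>)
    moreover have "embeds le \<rho> (omega_pow h) \<rho> {x\<in>omega_pow h. i \<le> x}"
    proof (cases "i = {#}")
      case True
      then show ?thesis using e(3) le_in by (intro embeds_refl) auto
    next
      case False
      then show ?thesis using ind i(1) unfolding indecomposable_single_iff by blast
    qed
    ultimately show ?thesis using embeds_trans by blast
  qed
qed

lemma indecomposable_embeds_UN_atMost:
  fixes C :: "nat \<Rightarrow> nat multiset set"
  assumes ind: "indecomposable le ({#h#}, \<rho>)"
    and C_ord: "\<And>n n' x y. n < n' \<Longrightarrow> x \<in> C n \<Longrightarrow> y \<in> C n' \<Longrightarrow> x < y"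
  shows "embeds le \<rho> (omega_pow h) \<tau> (\<Union>n\<le>N. C n) \<Longrightarrow> \<exists>n\<le>N. embeds le \<rho> (omega_pow h) \<tau> (C n)"
proof (induction N)
  case 0
  then show ?case by simp
next
  case (Suc N)
  have "embeds le \<rho> (omega_pow h) \<tau> ((\<Union>n\<le>N. C n) \<union> C (Suc N))"
    using Suc.prems by (simp add: atMost_Suc Un_commute)
  then have "embeds le \<rho> (omega_pow h) \<tau> (\<Union>n\<le>N. C n) \<or> embeds le \<rho> (omega_pow h) \<tau> (C (Suc N))"
    by (rule indecomposable_embeds_Un[OF ind]) (use C_ord le_imp_less_Suc in blast)
  then show ?case using Suc.IH le_SucI by blast
qed

text \<open>The tail from \<open>d\<close> contains the translate by \<open>m\<close>-fold blocks beyond the block of \<open>d\<close>.\<close>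

lemma indecomposable_periodic:
  assumes "0 < m" and in_Q: "\<rho> ` omega_pow (Suc H) \<subseteq> Q"
    and periodic: "\<And>x. x \<in> omega_pow (Suc H) \<Longrightarrow> \<rho> (replicate_mset m H + x) = \<rho> x"
  shows "indecomposable le ({#Suc H#}, \<rho>)"
  unfolding indecomposable_single_iff
proof (intro ballI impI)
  fix d assume d: "d \<in> omega_pow (Suc H)" "d \<noteq> {#}"
  define N where "N = count d H"
  define \<phi> where "\<phi> x = replicate_mset (m * Suc N) H + x" for x
  have \<phi>_in: "\<phi> x \<in> omega_pow (Suc H)" if "x \<in> omega_pow (Suc H)" for x
    using that by (auto simp: \<phi>_def omega_pow_def)
  have d_le: "d \<le> \<phi> x" if x: "x \<in> omega_pow (Suc H)" for x
  proof -
    obtain r where d_eq: "d = replicate_mset N H + r" and r: "r \<in> omega_pow H"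
      using omega_pow_Suc_decomp[OF d(1)] unfolding N_def shift_def by metis
    obtain s where x_eq: "x = replicate_mset (count x H) H + s" and s: "s \<in> omega_pow H"
      using omega_pow_Suc_decomp[OF x] unfolding shift_def by metis
    have "Suc N \<le> m * Suc N" using \<open>0 < m\<close> by (cases m) auto
    then have "N < m * Suc N + count x H" by linarith
    then show ?thesis
      unfolding d_eq \<phi>_def by (subst x_eq) (simp add: replicate_mset_add_le_iff[OF r s]
        replicate_mset_add[symmetric] add.assoc[symmetric])
  qed
  show "embeds le \<rho> (omega_pow (Suc H)) \<rho> {x \<in> omega_pow (Suc H). d \<le> x}"
  proof (rule embedsI[of _ \<phi>])
    show "strict_mono_on (omega_pow (Suc H)) \<phi>" by (auto simp: strict_mono_on_def \<phi>_def)
    show "\<phi> ` omega_pow (Suc H) \<subseteq> {x \<in> omega_pow (Suc H). d \<le> x}" using \<phi>_in d_le by auto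
    show "\<forall>x\<in>omega_pow (Suc H). le (\<rho> x) (\<rho> (\<phi> x))"
    proof
      fix x assume "x \<in> omega_pow (Suc H)"
      then show "le (\<rho> x) (\<rho> (\<phi> x))"
        using periodic_replicate_mset_mult[where \<rho> = \<rho> and m = m and H = H, OF periodic, of x "Suc N"]
          in_Q le_refl
        unfolding \<phi>_def by auto
    qed
  qed
qed

lemma indecomposable_embeds_blocks_from:
  assumes ind: "indecomposable le ({#Suc h#}, \<rho>)" and in_Q: "\<rho> ` omega_pow (Suc h) \<subseteq> Q"
  shows "embeds le \<rho> (omega_pow (Suc h)) \<rho> (\<Union>n\<in>{N..}. block h n)"
proof (cases "N = 0")
  case True
  then show ?thesis using embeds_refl[OF in_Q] unfolding omega_pow_Suc_eq_UN_block by simp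
next
  case False
  define d where "d = replicate_mset N h"
  have "d \<in> omega_pow (Suc h)" "d \<noteq> {#}" unfolding d_def using False by (auto simp: omega_pow_def)
  then have "embeds le \<rho> (omega_pow (Suc h)) \<rho> {x\<in>omega_pow (Suc h). d \<le> x}"
    using ind unfolding indecomposable_single_iff by blast
  moreover have "{x\<in>omega_pow (Suc h). d \<le> x} \<subseteq> (\<Union>n\<in>{N..}. block h n)"
  proof
    fix x assume x: "x \<in> {x\<in>omega_pow (Suc h). d \<le> x}"
    then obtain r where x_eq: "x = replicate_mset (count x h) h + r" and r: "r \<in> omega_pow h"
      using omega_pow_Suc_decomp unfolding shift_def by (metis (no_types, lifting) mem_Collect_eq)
    have "replicate_mset N h + {#} \<le> replicate_mset (count x h) h + r"
      using x x_eq unfolding d_def by simp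
    then have "N \<le> count x h" unfolding replicate_mset_add_le_iff[OF empty_in_omega_pow r] by auto
    moreover have "x \<in> block h (count x h)" unfolding block_def shift_def using x_eq r by blast
    ultimately show "x \<in> (\<Union>n\<in>{N..}. block h n)" by blast
  qed
  ultimately show ?thesis by (rule embeds_mono[OF _ subset_refl])
qed

end

section \<open>The sequence of a tree\<close>

text \<open>A pair \<open>(h, \<rho>)\<close> stands for the sequence of length \<open>\<omega>^h\<close> given by \<open>\<rho>\<close> on \<^term>\<open>omega_pow h\<close>.\<close>

type_synonym 'q pow_seq = "nat \<times> (nat multiset \<Rightarrow> 'q)"

definition max_height :: "'q pow_seq list \<Rightarrow> nat" where
  "max_height xs = Max (fst ` set xs)"

definition highest_child :: "'q pow_seq list \<Rightarrow> nat" where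
  "highest_child xs = (SOME i. i < length xs \<and> fst (xs ! i) = max_height xs)"

text \<open>For children \<open>xs\<close> of heights at most \<open>H\<close>, the node sequence has length \<open>\<omega>^(H+1)\<close>; its
  \<open>n\<close>-th block \<open>\<omega>^H\<cdot>n + r\<close> starts with child \<open>n mod length xs\<close> and is filled up with a highest
  child.\<close>

definition node_fun :: "'q pow_seq list \<Rightarrow> nat multiset \<Rightarrow> 'q" where
  "node_fun xs x =
    (let j = count x (max_height xs) mod length xs; r = filter_mset (\<lambda>y. y < max_height xs) x in
     if r \<in> omega_pow (fst (xs ! j)) then snd (xs ! j) r else snd (xs ! highest_child xs) r)"

definition node_seq :: "'q pow_seq list \<Rightarrow> 'q pow_seq" where
  "node_seq xs = (Suc (max_height xs), node_fun xs)"

primrec seq_of_tree :: "'q tree \<Rightarrow> 'q pow_seq" where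
  "seq_of_tree (Leaf q) = (0, \<lambda>_. q)"
| "seq_of_tree (Node ts) = node_seq (SOME xs. set xs = fset (fimage seq_of_tree ts))"

definition child_seqs :: "'q tree fset \<Rightarrow> 'q pow_seq list" where
  "child_seqs ts = (SOME xs. set xs = fset (fimage seq_of_tree ts))"

lemma seq_of_tree_Node [simp]: "seq_of_tree (Node ts) = node_seq (child_seqs ts)"
  by (simp add: child_seqs_def)

declare seq_of_tree.simps(2) [simp del]

lemma set_child_seqs: "set (child_seqs ts) = seq_of_tree ` fset ts"
proof -
  have "\<exists>xs. set xs = seq_of_tree ` fset ts" by (rule finite_list) simp
  then show ?thesis unfolding child_seqs_def fimage.rep_eq by (rule someI_ex)
qed

lemma child_seqs_not_Nil: "ts \<noteq> {||} \<Longrightarrow> child_seqs ts \<noteq> []"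
  using set_child_seqs[of ts] by auto

lemma child_seqs_nth:
  assumes "i < length (child_seqs ts)"
  obtains t where "t |\<in>| ts" "child_seqs ts ! i = seq_of_tree t"
  using assms set_child_seqs[of ts] nth_mem by (metis imageE)

lemma child_seqs_index:
  assumes "t |\<in>| ts"
  obtains i where "i < length (child_seqs ts)" "child_seqs ts ! i = seq_of_tree t"
  using assms set_child_seqs[of ts] by (metis imageI in_set_conv_nth)

text \<open>Block \<open>n\<close> of the node sequence consists of part \<open>2n\<close>, a copy of child \<open>n mod length xs\<close>,
  followed by part \<open>2n+1\<close>, the rest of a highest child; \<^term>\<open>part_child xs p\<close> is the child
  that part \<open>p\<close> is taken from.\<close>

definition head_part :: "'q pow_seq list \<Rightarrow> nat \<Rightarrow> nat multiset set" where
  "head_part xs n = shift n (max_height xs) ` omega_pow (fst (xs ! (n mod length xs)))"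

definition tail_part :: "'q pow_seq list \<Rightarrow> nat \<Rightarrow> nat multiset set" where
  "tail_part xs n =
     shift n (max_height xs) ` (omega_pow (max_height xs) - omega_pow (fst (xs ! (n mod length xs))))"

definition node_part :: "'q pow_seq list \<Rightarrow> nat \<Rightarrow> nat multiset set" where
  "node_part xs p = (if even p then head_part xs (p div 2) else tail_part xs (p div 2))"

definition part_child :: "'q pow_seq list \<Rightarrow> nat \<Rightarrow> nat" where
  "part_child xs p = (if even p then (p div 2) mod length xs else highest_child xs)"

context
  fixes xs :: "'q pow_seq list"
  assumes xs_ne: "xs \<noteq> []"
begin

lemma max_height_ge: "i < length xs \<Longrightarrow> fst (xs ! i) \<le> max_height xs"
  unfolding max_height_def by (rule Max_ge) auto

lemma highest_child: "highest_child xs < length xs" "fst (xs ! highest_child xs) = max_height xs"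
proof -
  have "max_height xs \<in> fst ` set xs" unfolding max_height_def using xs_ne by (intro Max_in) auto
  then have "\<exists>i. i < length xs \<and> fst (xs ! i) = max_height xs" by (force simp: in_set_conv_nth)
  then have "highest_child xs < length xs \<and> fst (xs ! highest_child xs) = max_height xs"
    unfolding highest_child_def by (rule someI_ex)
  then show "highest_child xs < length xs" "fst (xs ! highest_child xs) = max_height xs" by auto
qed

lemma part_child_less: "part_child xs p < length xs"
  using highest_child(1) xs_ne by (simp add: part_child_def)

lemma omega_pow_child_subset: "omega_pow (fst (xs ! (n mod length xs))) \<subseteq> omega_pow (max_height xs)"
  using xs_ne by (intro omega_pow_mono max_height_ge) simp

lemma node_fun_head:
  assumes "r \<in> omega_pow (fst (xs ! (n mod length xs)))"
  shows "node_fun xs (shift n (max_height xs) r) = snd (xs ! (n mod length xs)) r"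
proof -
  have "r \<in> omega_pow (max_height xs)" using assms omega_pow_child_subset by blast
  then show ?thesis using assms by (simp add: node_fun_def count_shift filter_shift)
qed

lemma node_fun_tail:
  assumes "r \<in> omega_pow (max_height xs)" "r \<notin> omega_pow (fst (xs ! (n mod length xs)))"
  shows "node_fun xs (shift n (max_height xs) r) = snd (xs ! highest_child xs) r"
  using assms by (simp add: node_fun_def count_shift filter_shift)

lemma node_part_subset_block: "node_part xs p \<subseteq> block (max_height xs) (p div 2)"
  using omega_pow_child_subset by (auto simp: node_part_def head_part_def tail_part_def block_def)

lemma block_eq_node_parts: "block (max_height xs) n = node_part xs (2 * n) \<union> node_part xs (2 * n + 1)"
  using omega_pow_child_subset
  by (auto simp: node_part_def head_part_def tail_part_def block_def)

lemma node_part_less: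
  assumes "p < p'" "x \<in> node_part xs p" "y \<in> node_part xs p'"
  shows "x < y"
proof (cases "p div 2 = p' div 2")
  case True
  then have "even p" "odd p'" using \<open>p < p'\<close> by presburger+
  then obtain r r' where "x = shift (p div 2) (max_height xs) r" "y = shift (p div 2) (max_height xs) r'"
    and "r \<in> omega_pow (fst (xs ! (p div 2 mod length xs)))"
    and "r' \<notin> omega_pow (fst (xs ! (p div 2 mod length xs)))"
    using assms(2,3) True by (auto simp: node_part_def head_part_def tail_part_def)
  then show ?thesis using less_if_notin_omega_pow by (simp add: shift_less_iff)
next
  case False
  then have "p div 2 < p' div 2" using \<open>p < p'\<close> by (simp add: div_le_mono le_neq_implies_less)
  then show ?thesis using block_less assms(2,3) node_part_subset_block by blast
qed

lemma UN_node_part: "(\<Union>p. node_part xs p) = omega_pow (Suc (max_height xs))"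
proof
  show "(\<Union>p. node_part xs p) \<subseteq> omega_pow (Suc (max_height xs))"
    using node_part_subset_block block_subset_omega_pow_Suc by blast
  show "omega_pow (Suc (max_height xs)) \<subseteq> (\<Union>p. node_part xs p)"
    unfolding omega_pow_Suc_eq_UN_block block_eq_node_parts by blast
qed

lemma node_fun_value:
  assumes "x \<in> omega_pow (Suc (max_height xs))"
  shows "\<exists>j<length xs. \<exists>r\<in>omega_pow (fst (xs ! j)). node_fun xs x = snd (xs ! j) r"
proof -
  obtain p where p: "x \<in> node_part xs p" using assms UN_node_part by blast
  show ?thesis
  proof (cases "even p")
    case True
    then obtain r where r: "r \<in> omega_pow (fst (xs ! (p div 2 mod length xs)))"
      and x: "x = shift (p div 2) (max_height xs) r"
      using p by (auto simp: node_part_def head_part_def)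
    show ?thesis
      using node_fun_head[OF r] r xs_ne unfolding x by (intro exI[of _ "p div 2 mod length xs"]) auto
  next
    case False
    then obtain r where r: "r \<in> omega_pow (max_height xs)"
      "r \<notin> omega_pow (fst (xs ! (p div 2 mod length xs)))"
      and x: "x = shift (p div 2) (max_height xs) r"
      using p by (auto simp: node_part_def tail_part_def)
    show ?thesis
      using node_fun_tail[OF r] r highest_child unfolding x by (intro exI[of _ "highest_child xs"]) auto
  qed
qed

end

lemma embeds_block_into_initial_blocks:
  assumes "embeds le \<sigma> (omega_pow (Suc H)) \<tau> (omega_pow (Suc K))"
  obtains N where "embeds le \<sigma> (block H n) \<tau> (\<Union>n'\<le>N. block K n')"
proof -
  obtain e where e: "strict_mono_on (omega_pow (Suc H)) e" "e ` omega_pow (Suc H) \<subseteq> omega_pow (Suc K)"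
    "\<forall>x\<in>omega_pow (Suc H). le (\<sigma> x) (\<tau> (e x))"
    using assms unfolding embeds_def by blast
  define z where "z = shift (Suc n) H {#}"
  have z: "z \<in> block H (Suc n)" unfolding z_def block_def by simp
  then have "e z \<in> omega_pow (Suc K)" using e(2) block_subset_omega_pow_Suc by blast
  then obtain N where N: "e z \<in> block K N" unfolding omega_pow_Suc_eq_UN_block by blast
  have "e x \<in> (\<Union>n'\<le>N. block K n')" if x: "x \<in> block H n" for x
  proof -
    have "x < z" using block_less[OF lessI x z] .
    then have "e x < e z" using e(1) x z block_subset_omega_pow_Suc by (blast intro: strict_mono_onD)
    moreover obtain n' where n': "e x \<in> block K n'"
      using e(2) x block_subset_omega_pow_Suc unfolding omega_pow_Suc_eq_UN_block by blast
    ultimately have "n' \<le> N" using block_less[OF _ N n'] by (meson leI order.asym)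
    then show ?thesis using n' by blast
  qed
  then have "embeds le \<sigma> (block H n) \<tau> (\<Union>n'\<le>N. block K n')"
  proof (intro embedsI[of _ e])
    show "strict_mono_on (block H n) e" using e(1) block_subset_omega_pow_Suc by (rule monotone_on_subset)
    show "\<forall>x\<in>block H n. le (\<sigma> x) (\<tau> (e x))" using e(3) block_subset_omega_pow_Suc by blast
  qed blast
  then show ?thesis by (rule that)
qed

definition seq_in :: "'q set \<Rightarrow> 'q pow_seq \<Rightarrow> bool" where
  "seq_in Q s \<longleftrightarrow> snd s ` omega_pow (fst s) \<subseteq> Q"

lemma head_part_subset_block: "xs \<noteq> [] \<Longrightarrow> head_part xs n \<subseteq> block (max_height xs) n"
  using node_part_subset_block[of xs "2 * n"] by (simp add: node_part_def)

context qo_on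
begin

abbreviation pseq_le :: "'q pow_seq \<Rightarrow> 'q pow_seq \<Rightarrow> bool" where
  "pseq_le a b \<equiv> embeds le (snd a) (omega_pow (fst a)) (snd b) (omega_pow (fst b))"

context
  fixes xs :: "'q pow_seq list"
  assumes xs_ne: "xs \<noteq> []" and xs_in: "\<forall>s\<in>set xs. seq_in Q s"
begin

lemma seq_in_nth: "i < length xs \<Longrightarrow> snd (xs ! i) ` omega_pow (fst (xs ! i)) \<subseteq> Q"
  using xs_in by (auto simp: seq_in_def)

lemma node_fun_in: "node_fun xs ` omega_pow (Suc (max_height xs)) \<subseteq> Q"
  using node_fun_value[OF xs_ne] seq_in_nth by fastforce

lemma embeds_child_head_part:
  assumes "n mod length xs = j"
  shows "embeds le (snd (xs ! j)) (omega_pow (fst (xs ! j))) (node_fun xs) (head_part xs n)"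
proof -
  have j: "j < length xs" using assms xs_ne by auto
  have "le (snd (xs ! j) x) (node_fun xs (shift n (max_height xs) x))"
    if "x \<in> omega_pow (fst (xs ! j))" for x
  proof -
    have "snd (xs ! j) x \<in> Q" using seq_in_nth[OF j] that by blast
    moreover have "node_fun xs (shift n (max_height xs) x) = snd (xs ! j) x"
      using node_fun_head[OF xs_ne, of x n] that assms by simp
    ultimately show ?thesis using le_refl by simp
  qed
  then show ?thesis by (intro embedsI[OF strict_mono_on_shift]) (auto simp: head_part_def assms)
qed

lemma embeds_node_part_child:
  "embeds le (node_fun xs) (node_part xs p)
     (snd (xs ! part_child xs p)) (omega_pow (fst (xs ! part_child xs p)))"
proof (cases "even p")
  case True
  define n where "n = p div 2"
  have "embeds le (node_fun xs) (shift n (max_height xs) ` omega_pow (fst (xs ! (n mod length xs))))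
      (snd (xs ! (n mod length xs))) (omega_pow (fst (xs ! (n mod length xs))))"
  proof (rule embeds_inv_image[OF strict_mono_on_shift])
    have "snd (xs ! (n mod length xs)) ` omega_pow (fst (xs ! (n mod length xs))) \<subseteq> Q"
      using seq_in_nth xs_ne by simp
    then show "\<forall>x\<in>omega_pow (fst (xs ! (n mod length xs))).
        le (node_fun xs (shift n (max_height xs) x)) (snd (xs ! (n mod length xs)) x)"
      using node_fun_head[OF xs_ne] le_refl by auto
  qed simp
  then show ?thesis using True by (simp add: node_part_def head_part_def part_child_def n_def)
next
  case False
  define n where "n = p div 2"
  have "embeds le (node_fun xs)
      (shift n (max_height xs) ` (omega_pow (max_height xs) - omega_pow (fst (xs ! (n mod length xs)))))
      (snd (xs ! highest_child xs)) (omega_pow (fst (xs ! highest_child xs)))"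
  proof (rule embeds_inv_image[OF strict_mono_on_shift])
    have "snd (xs ! highest_child xs) ` omega_pow (max_height xs) \<subseteq> Q"
      using seq_in_nth highest_child[OF xs_ne] by metis
    then show "\<forall>x\<in>omega_pow (max_height xs) - omega_pow (fst (xs ! (n mod length xs))).
        le (node_fun xs (shift n (max_height xs) x)) (snd (xs ! highest_child xs) x)"
      using node_fun_tail[OF xs_ne] le_refl by auto
  qed (use highest_child[OF xs_ne] in auto)
  then show ?thesis using False by (simp add: node_part_def tail_part_def part_child_def n_def)
qed

lemma embeds_node_fun:
  assumes S_ord: "\<And>p p' x y. p < p' \<Longrightarrow> x \<in> S p \<Longrightarrow> y \<in> S p' \<Longrightarrow> x < y"
    and emb: "\<And>p. embeds le (snd (xs ! part_child xs p)) (omega_pow (fst (xs ! part_child xs p))) \<tau> (S p)"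
    and "(\<Union>p. S p) \<subseteq> T"
  shows "embeds le (node_fun xs) (omega_pow (Suc (max_height xs))) \<tau> T"
proof -
  have "embeds le (node_fun xs) (\<Union>p. node_part xs p) \<tau> (\<Union>p. S p)"
    using node_part_less[OF xs_ne] S_ord embeds_trans[OF embeds_node_part_child emb]
    by (rule embeds_UN)
  then show ?thesis using \<open>(\<Union>p. S p) \<subseteq> T\<close> UN_node_part[OF xs_ne] embeds_mono by fastforce
qed

lemma indecomposable_node_fun: "indecomposable le ({#Suc (max_height xs)#}, node_fun xs)"
proof (rule indecomposable_periodic[OF _ node_fun_in])
  show "0 < length xs" using xs_ne by simp
  have no_low: "filter_mset (\<lambda>y. y < max_height xs) (replicate_mset n (max_height xs)) = {#}" for n
    by simp
  show "node_fun xs (replicate_mset (length xs) (max_height xs) + x) = node_fun xs x" for x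
    unfolding node_fun_def filter_union_mset no_low by simp
qed

end

text \<open>Part \<open>p\<close> goes to the copy of its partner child in block \<open>m\<cdot>p + \<phi>\<close>, where \<open>m\<close> is the
  number of target children and \<open>\<phi> < m\<close> the partner's index; these blocks increase with \<open>p\<close>.\<close>

lemma pseq_le_node_seq:
  assumes xs: "xs \<noteq> []" "\<forall>s\<in>set xs. seq_in Q s" and ys: "ys \<noteq> []" "\<forall>s\<in>set ys. seq_in Q s"
    and le: "\<forall>i<length xs. \<exists>j<length ys. pseq_le (xs ! i) (ys ! j)"
  shows "pseq_le (node_seq xs) (node_seq ys)"
proof -
  obtain \<phi> where \<phi>: "\<And>i. i < length xs \<Longrightarrow> \<phi> i < length ys \<and> pseq_le (xs ! i) (ys ! \<phi> i)"
    using le by metis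
  define m where "m = length ys"
  define b where "b p = m * p + \<phi> (part_child xs p)" for p
  define S where "S p = head_part ys (b p)" for p
  have \<phi>_c: "\<phi> (part_child xs p) < m" "pseq_le (xs ! part_child xs p) (ys ! \<phi> (part_child xs p))" for p
    using \<phi>[OF part_child_less[OF xs(1)]] m_def by auto
  have S_block: "S p \<subseteq> block (max_height ys) (b p)" for p
    using head_part_subset_block[OF ys(1)] by (simp add: S_def)
  have "b p < b p'" if "p < p'" for p p'
  proof -
    have "b p < m * Suc p" using \<phi>_c(1) by (simp add: b_def)
    also have "\<dots> \<le> m * p'" using that by (intro mult_le_mono2) simp
    finally show ?thesis by (simp add: b_def)
  qed
  then have S_ord: "x < y" if "p < p'" "x \<in> S p" "y \<in> S p'" for p p' x y
    using that S_block by (meson block_less subsetD)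
  have "b p mod length ys = \<phi> (part_child xs p)" for p using \<phi>_c(1) by (simp add: b_def m_def)
  then have emb: "embeds le (snd (xs ! part_child xs p)) (omega_pow (fst (xs ! part_child xs p)))
      (node_fun ys) (S p)" for p
    unfolding S_def using embeds_trans[OF \<phi>_c(2) embeds_child_head_part[OF ys]] by blast
  have "(\<Union>p. S p) \<subseteq> omega_pow (Suc (max_height ys))"
    using S_block block_subset_omega_pow_Suc by blast
  with S_ord emb show ?thesis
    unfolding node_seq_def fst_conv snd_conv by (rule embeds_node_fun[OF xs])
qed

text \<open>An embedding between node sequences maps the copy of child \<open>i\<close> in block \<open>i\<close> into finitely
  many parts, hence, by primeness, into a single part, i.e. into a child of the target.\<close>

lemma pseq_le_node_seq_child:
  assumes xs: "xs \<noteq> []" "\<forall>s\<in>set xs. seq_in Q s" and ys: "ys \<noteq> []" "\<forall>s\<in>set ys. seq_in Q s"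
    and emb: "pseq_le (node_seq xs) (node_seq ys)"
    and i: "i < length xs" and ind: "indecomposable le ({#fst (xs ! i)#}, snd (xs ! i))"
  shows "\<exists>j<length ys. pseq_le (xs ! i) (ys ! j)"
proof -
  have "embeds le (snd (xs ! i)) (omega_pow (fst (xs ! i))) (node_fun xs) (head_part xs i)"
    using i by (intro embeds_child_head_part[OF xs]) simp
  then have child: "embeds le (snd (xs ! i)) (omega_pow (fst (xs ! i))) (node_fun xs) (block (max_height xs) i)"
    by (rule embeds_mono[OF _ subset_refl head_part_subset_block[OF xs(1)]])
  obtain N where blocks: "embeds le (node_fun xs) (block (max_height xs) i) (node_fun ys)
      (\<Union>n\<le>N. block (max_height ys) n)"
    using emb unfolding node_seq_def fst_conv snd_conv by (rule embeds_block_into_initial_blocks)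
  have "(\<Union>n\<le>N. block (max_height ys) n) \<subseteq> (\<Union>p\<le>2 * N + 1. node_part ys p)"
  proof
    fix x assume "x \<in> (\<Union>n\<le>N. block (max_height ys) n)"
    then obtain n where "n \<le> N" "x \<in> node_part ys (2 * n) \<union> node_part ys (2 * n + 1)"
      unfolding block_eq_node_parts[OF ys(1)] by blast
    moreover have "2 * n \<le> 2 * N + 1" "2 * n + 1 \<le> 2 * N + 1" using \<open>n \<le> N\<close> by simp_all
    ultimately show "x \<in> (\<Union>p\<le>2 * N + 1. node_part ys p)" by blast
  qed
  with child blocks have "embeds le (snd (xs ! i)) (omega_pow (fst (xs ! i))) (node_fun ys)
      (\<Union>p\<le>2 * N + 1. node_part ys p)"
    by (meson embeds_mono embeds_trans order_refl)
  with node_part_less[OF ys(1)] obtain p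
    where "embeds le (snd (xs ! i)) (omega_pow (fst (xs ! i))) (node_fun ys) (node_part ys p)"
    using indecomposable_embeds_UN_atMost[OF ind] by blast
  then have "pseq_le (xs ! i) (ys ! part_child ys p)"
    using embeds_node_part_child[OF ys] by (rule embeds_trans)
  then show ?thesis using part_child_less[OF ys(1)] by blast
qed

end

primrec labels :: "'q tree \<Rightarrow> 'q set" where
  "labels (Leaf q) = {q}"
| "labels (Node ts) = \<Union> (fset (fimage labels ts))"

lemma finite_labels: "finite (labels t)"
  by (induction t) auto

lemma tree_in_Node: "tree_in R (Node ts) \<longleftrightarrow> ts \<noteq> {||} \<and> (\<forall>t. t |\<in>| ts \<longrightarrow> tree_in R t)"
  by (auto elim: tree_in.cases intro: tree_in.intros)

lemma tree_in_Leaf: "tree_in R (Leaf q) \<longleftrightarrow> q \<in> R"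
  by (auto elim: tree_in.cases intro: tree_in.intros)

lemma labels_subset: "tree_in R t \<Longrightarrow> labels t \<subseteq> R"
  by (induction rule: tree_in.induct) auto

lemma seq_of_tree_range:
  "tree_in R t \<Longrightarrow> snd (seq_of_tree t) ` omega_pow (fst (seq_of_tree t)) \<subseteq> labels t"
proof (induction rule: tree_in.induct)
  case (leaf_in q)
  then show ?case by (auto simp: omega_pow_0)
next
  case (node_in ts)
  have ne: "child_seqs ts \<noteq> []" using child_seqs_not_Nil node_in(1) by blast
  show ?case
  proof
    fix v assume "v \<in> snd (seq_of_tree (Node ts)) ` omega_pow (fst (seq_of_tree (Node ts)))"
    then obtain x where x: "x \<in> omega_pow (Suc (max_height (child_seqs ts)))" "v = node_fun (child_seqs ts) x"
      by (auto simp: node_seq_def)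
    obtain j r where j: "j < length (child_seqs ts)" and r: "r \<in> omega_pow (fst (child_seqs ts ! j))"
      and v: "v = snd (child_seqs ts ! j) r"
      using node_fun_value[OF ne x(1)] x(2) by auto
    obtain t where t: "t |\<in>| ts" "child_seqs ts ! j = seq_of_tree t" using child_seqs_nth[OF j] .
    then have "v \<in> labels t" using node_in(2) r v by auto
    then show "v \<in> labels (Node ts)" using t by auto
  qed
qed

context qo_on
begin

lemma seq_in_seq_of_tree: "tree_in Q t \<Longrightarrow> seq_in Q (seq_of_tree t)"
  using seq_of_tree_range labels_subset unfolding seq_in_def by blast

lemma seq_in_child_seqs: "tree_in Q (Node ts) \<Longrightarrow> \<forall>s\<in>set (child_seqs ts). seq_in Q s"
  using set_child_seqs[of ts] seq_in_seq_of_tree unfolding tree_in_Node by auto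

lemma child_seqs_props:
  assumes "tree_in Q (Node ts)"
  shows "child_seqs ts \<noteq> []" "\<forall>s\<in>set (child_seqs ts). seq_in Q s"
  using assms child_seqs_not_Nil seq_in_child_seqs unfolding tree_in_Node by blast+

lemma indecomposable_seq_of_tree:
  "tree_in Q t \<Longrightarrow> indecomposable le ({#fst (seq_of_tree t)#}, snd (seq_of_tree t))"
proof (induction rule: tree_in.induct)
  case (leaf_in q)
  then show ?case unfolding indecomposable_single_iff by (auto simp: omega_pow_0)
next
  case (node_in ts)
  then have "tree_in Q (Node ts)" by (simp add: tree_in_Node)
  then show ?case
    using indecomposable_node_fun[OF child_seqs_props] by (simp add: node_seq_def)
qed

lemma pseq_le_child:
  assumes tin: "tree_in Q (Node ts)" and t: "t |\<in>| ts"
  shows "pseq_le (seq_of_tree t) (seq_of_tree (Node ts))"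
proof -
  obtain j where j: "j < length (child_seqs ts)" "child_seqs ts ! j = seq_of_tree t"
    using child_seqs_index[OF t] .
  have "embeds le (snd (child_seqs ts ! j)) (omega_pow (fst (child_seqs ts ! j)))
      (node_fun (child_seqs ts)) (head_part (child_seqs ts) j)"
    using j by (intro embeds_child_head_part[OF child_seqs_props[OF tin]]) simp
  then have "embeds le (snd (child_seqs ts ! j)) (omega_pow (fst (child_seqs ts ! j)))
      (node_fun (child_seqs ts)) (omega_pow (Suc (max_height (child_seqs ts))))"
    using head_part_subset_block[OF child_seqs_props(1)[OF tin]] block_subset_omega_pow_Suc
    by (blast intro: embeds_mono)
  then show ?thesis unfolding j(2) by (simp add: node_seq_def)
qed

lemma tree_le_imp_pseq_le:
  "tree_le le s t \<Longrightarrow> tree_in Q s \<Longrightarrow> tree_in Q t \<Longrightarrow> pseq_le (seq_of_tree s) (seq_of_tree t)"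
proof (induction rule: tree_le.induct)
  case (leaf_leaf x y)
  then show ?case by (simp add: embeds_omega_pow_0_iff)
next
  case (leaf_node t ts x)
  then have "pseq_le (seq_of_tree (Leaf x)) (seq_of_tree t)" by (simp add: tree_in_Node)
  then show ?case using pseq_le_child[OF leaf_node(5,1)] by (rule embeds_trans)
next
  case (node_node ss ts)
  have "\<forall>i<length (child_seqs ss). \<exists>j<length (child_seqs ts). pseq_le (child_seqs ss ! i) (child_seqs ts ! j)"
  proof (intro allI impI)
    fix i assume "i < length (child_seqs ss)"
    then obtain s where s: "s |\<in>| ss" "child_seqs ss ! i = seq_of_tree s" by (rule child_seqs_nth)
    then obtain t where t: "t |\<in>| ts" "pseq_le (seq_of_tree s) (seq_of_tree t)"
      using node_node by (metis tree_in_Node)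
    obtain j where "j < length (child_seqs ts)" "child_seqs ts ! j = seq_of_tree t"
      using child_seqs_index[OF t(1)] .
    then show "\<exists>j<length (child_seqs ts). pseq_le (child_seqs ss ! i) (child_seqs ts ! j)"
      using s(2) t(2) by metis
  qed
  then show ?case
    using pseq_le_node_seq[OF child_seqs_props[OF node_node(2)] child_seqs_props[OF node_node(3)]] by simp
qed

lemma leaf_le_tree:
  "tree_in Q t \<Longrightarrow> x \<in> omega_pow (fst (seq_of_tree t)) \<Longrightarrow> le q (snd (seq_of_tree t) x) \<Longrightarrow>
    tree_le le (Leaf q) t"
proof (induction arbitrary: x rule: tree_in.induct)
  case (leaf_in y)
  then show ?case by (auto intro: tree_le.intros)
next
  case (node_in ts)
  have ne: "child_seqs ts \<noteq> []" using child_seqs_not_Nil node_in(1) by blast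
  have x: "x \<in> omega_pow (Suc (max_height (child_seqs ts)))" using node_in(3) by (simp add: node_seq_def)
  obtain j r where j: "j < length (child_seqs ts)" and r: "r \<in> omega_pow (fst (child_seqs ts ! j))"
    and val: "node_fun (child_seqs ts) x = snd (child_seqs ts ! j) r"
    using node_fun_value[OF ne x] by blast
  obtain t where t: "t |\<in>| ts" "child_seqs ts ! j = seq_of_tree t" using child_seqs_nth[OF j] .
  have "tree_le le (Leaf q) t" using node_in(2) t r val node_in(4) by (auto simp: node_seq_def)
  then show ?case by (rule tree_le.leaf_node[OF t(1)])
qed

lemma pseq_le_imp_tree_le:
  "tree_in Q s \<Longrightarrow> tree_in Q t \<Longrightarrow> pseq_le (seq_of_tree s) (seq_of_tree t) \<Longrightarrow> tree_le le s t"
proof (induction s arbitrary: t)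
  case (Leaf q)
  then show ?case
    using leaf_le_tree[OF Leaf(2)] unfolding embeds_def by (fastforce simp: omega_pow_0)
next
  case (Node ss)
  show ?case
  proof (cases t)
    case (Leaf y)
    define H where "H = max_height (child_seqs ss)"
    obtain e where e: "strict_mono_on (omega_pow (Suc H)) e" "e ` omega_pow (Suc H) \<subseteq> omega_pow 0"
      using Node.prems(3) unfolding Leaf embeds_def by (auto simp: node_seq_def H_def)
    have in_H: "{#} \<in> omega_pow (Suc H)" "{#H#} \<in> omega_pow (Suc H)" by (auto simp: omega_pow_def)
    then have "e {#} < e {#H#}" using e(1) by (auto intro: strict_mono_onD)
    moreover have "e {#} = {#}" "e {#H#} = {#}" using e(2) in_H unfolding omega_pow_0 by blast+
    ultimately show ?thesis by simp
  next
    case (Node ts)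
    have xs: "child_seqs ss \<noteq> []" "\<forall>s\<in>set (child_seqs ss). seq_in Q s"
      using child_seqs_props[OF Node.prems(1)] by blast+
    have ys: "child_seqs ts \<noteq> []" "\<forall>s\<in>set (child_seqs ts). seq_in Q s"
      using child_seqs_props Node.prems(2) unfolding Node by blast+
    have emb: "pseq_le (node_seq (child_seqs ss)) (node_seq (child_seqs ts))"
      using Node.prems(3) unfolding Node by simp
    have "\<exists>t'. t' |\<in>| ts \<and> tree_le le s' t'" if s': "s' |\<in>| ss" for s'
    proof -
      obtain i where i: "i < length (child_seqs ss)" "child_seqs ss ! i = seq_of_tree s'"
        using child_seqs_index[OF s'] .
      have s'_in: "tree_in Q s'" using Node.prems(1) s' unfolding tree_in_Node by blast
      obtain j where j: "j < length (child_seqs ts)" "pseq_le (child_seqs ss ! i) (child_seqs ts ! j)"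
        using pseq_le_node_seq_child[OF xs ys emb i(1)] indecomposable_seq_of_tree[OF s'_in] i(2) by auto
      obtain t' where t': "t' |\<in>| ts" "child_seqs ts ! j = seq_of_tree t'" using child_seqs_nth[OF j(1)] .
      have "tree_in Q t'" using Node.prems(2) t'(1) unfolding Node tree_in_Node by blast
      then have "tree_le le s' t'" using Node.IH[OF _ s'_in] s' j(2) i(2) t'(2) by simp
      then show ?thesis using t'(1) by blast
    qed
    then show ?thesis unfolding Node by (blast intro: tree_le.node_node)
  qed
qed

end

section \<open>From sequences back to trees\<close>

primrec trees_upto :: "nat \<Rightarrow> 'q set \<Rightarrow> 'q tree set" where
  "trees_upto 0 R = Leaf ` R"
| "trees_upto (Suc h) R = trees_upto h R \<union> {Node ts | ts. ts \<noteq> {||} \<and> fset ts \<subseteq> trees_upto h R}"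

lemma finite_trees_upto: "finite R \<Longrightarrow> finite (trees_upto h R)"
proof (induction h)
  case (Suc h)
  have "{Node ts | ts. ts \<noteq> {||} \<and> fset ts \<subseteq> trees_upto h R}
      \<subseteq> (\<lambda>S. Node (Abs_fset S)) ` Pow (trees_upto h R)"
  proof
    fix t assume "t \<in> {Node ts | ts. ts \<noteq> {||} \<and> fset ts \<subseteq> trees_upto h R}"
    then obtain ts where "t = Node ts" "fset ts \<subseteq> trees_upto h R" by blast
    then show "t \<in> (\<lambda>S. Node (Abs_fset S)) ` Pow (trees_upto h R)"
      by (intro image_eqI[of _ _ "fset ts"]) (auto simp: fset_inverse)
  qed
  moreover have "finite ((\<lambda>S. Node (Abs_fset S)) ` Pow (trees_upto h R))" using Suc by simp
  ultimately show ?case using Suc by (simp add: finite_subset)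
qed simp

lemma tree_in_trees_upto: "t \<in> trees_upto h R \<Longrightarrow> tree_in R t"
  by (induction h arbitrary: t) (auto intro!: tree_in.intros)

lemma tree_in_mono: "tree_in R t \<Longrightarrow> R \<subseteq> Q \<Longrightarrow> tree_in Q t"
  by (induction rule: tree_in.induct) (auto intro: tree_in.intros)

text \<open>\<^term>\<open>below_concat le \<rho> D L\<close> says that \<open>\<rho>\<close> on \<open>D\<close> embeds into the concatenation of the
  sequences in \<open>L\<close>, phrased without constructing the concatenation: \<open>\<rho>\<close> embeds into every
  sequence that contains copies of the members of \<open>L\<close> in order.\<close>

definition below_concat :: "('q \<Rightarrow> 'q \<Rightarrow> bool) \<Rightarrow> (nat multiset \<Rightarrow> 'q) \<Rightarrow> nat multiset set \<Rightarrow>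
    'q pow_seq list \<Rightarrow> bool" where
  "below_concat le \<rho> D L \<longleftrightarrow>
    (\<forall>\<tau> S. (\<forall>i j x y. i < j \<longrightarrow> j < length L \<longrightarrow> x \<in> S i \<longrightarrow> y \<in> S j \<longrightarrow> x < y) \<longrightarrow>
      (\<forall>i<length L. embeds le (snd (L ! i)) (omega_pow (fst (L ! i))) \<tau> (S i)) \<longrightarrow>
      embeds le \<rho> D \<tau> (\<Union>i<length L. S i))"

lemma below_concatD:
  assumes "below_concat le \<rho> D L"
    and "\<And>i j x y. i < j \<Longrightarrow> j < length L \<Longrightarrow> x \<in> S i \<Longrightarrow> y \<in> S j \<Longrightarrow> x < y"
    and "\<And>i. i < length L \<Longrightarrow> embeds le (snd (L ! i)) (omega_pow (fst (L ! i))) \<tau> (S i)"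
  shows "embeds le \<rho> D \<tau> (\<Union>i<length L. S i)"
  using assms unfolding below_concat_def by blast

lemma below_concat_Nil: "below_concat le \<rho> {} []"
  unfolding below_concat_def by simp

lemma below_concat_append:
  assumes c1: "below_concat le \<rho> D1 L1" and c2: "below_concat le \<rho> D2 L2"
    and ord: "\<And>x y. x \<in> D1 \<Longrightarrow> y \<in> D2 \<Longrightarrow> x < y"
  shows "below_concat le \<rho> (D1 \<union> D2) (L1 @ L2)"
  unfolding below_concat_def
proof (intro allI impI)
  fix \<tau> and S :: "nat \<Rightarrow> nat multiset set"
  assume S_ord: "\<forall>i j x y. i < j \<longrightarrow> j < length (L1 @ L2) \<longrightarrow> x \<in> S i \<longrightarrow> y \<in> S j \<longrightarrow> x < y"
    and emb: "\<forall>i<length (L1 @ L2). embeds le (snd ((L1 @ L2) ! i)) (omega_pow (fst ((L1 @ L2) ! i))) \<tau> (S i)"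
  define S2 where "S2 i = S (length L1 + i)" for i
  have e1: "embeds le \<rho> D1 \<tau> (\<Union>i<length L1. S i)"
  proof (rule below_concatD[OF c1])
    show "x < y" if "i < j" "j < length L1" "x \<in> S i" "y \<in> S j" for i j x y
      using that by (intro S_ord[rule_format]) auto
    show "embeds le (snd (L1 ! i)) (omega_pow (fst (L1 ! i))) \<tau> (S i)" if "i < length L1" for i
      using emb[rule_format, of i] that by (simp add: nth_append)
  qed
  have e2: "embeds le \<rho> D2 \<tau> (\<Union>i<length L2. S2 i)"
  proof (rule below_concatD[OF c2])
    show "x < y" if "i < j" "j < length L2" "x \<in> S2 i" "y \<in> S2 j" for i j x y
      using S_ord[rule_format, of "length L1 + i" "length L1 + j" x y] that unfolding S2_def by simp
    show "embeds le (snd (L2 ! i)) (omega_pow (fst (L2 ! i))) \<tau> (S2 i)" if "i < length L2" for i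
      using emb[rule_format, of "length L1 + i"] that unfolding S2_def by (simp add: nth_append)
  qed
  have S12: "x < y" if xy: "x \<in> (\<Union>i<length L1. S i)" "y \<in> (\<Union>i<length L2. S2 i)" for x y
  proof -
    obtain i j where "i < length L1" "x \<in> S i" "j < length L2" "y \<in> S (length L1 + j)"
      using xy unfolding S2_def by blast
    then show ?thesis using S_ord[rule_format, of i "length L1 + j" x y] by simp
  qed
  from ord S12 e1 e2 have "embeds le \<rho> (D1 \<union> D2) \<tau> ((\<Union>i<length L1. S i) \<union> (\<Union>i<length L2. S2 i))"
    by (rule embeds_Un)
  moreover have "(\<Union>i<length L1. S i) \<subseteq> (\<Union>i<length (L1 @ L2). S i)"
    by (rule UN_mono) auto
  moreover have "(\<Union>i<length L2. S2 i) \<subseteq> (\<Union>i<length (L1 @ L2). S i)"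
    unfolding S2_def by (rule UN_least, rule UN_upper) auto
  ultimately show "embeds le \<rho> (D1 \<union> D2) \<tau> (\<Union>i<length (L1 @ L2). S i)"
    by (rule embeds_mono[OF _ subset_refl Un_least])
qed

lemma below_concat_concat:
  assumes "\<And>n. n < N \<Longrightarrow> below_concat le \<rho> (block h n) (Ls n)"
  shows "below_concat le \<rho> (\<Union>n<N. block h n) (concat (map Ls [0..<N]))"
  using assms
proof (induction N)
  case 0
  then show ?case using below_concat_Nil by simp
next
  case (Suc N)
  have "below_concat le \<rho> ((\<Union>n<N. block h n) \<union> block h N) (concat (map Ls [0..<N]) @ Ls N)"
    using Suc by (intro below_concat_append) (auto intro: block_less)
  then show ?case by (simp add: lessThan_Suc Un_commute)
qed

lemma ex_strict_mono_choice:
  assumes "\<And>p N. \<exists>n\<ge>N. P p n"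
  obtains f :: "nat \<Rightarrow> nat" where "strict_mono f" "\<And>p. P p (f p)"
proof -
  define f where "f = rec_nat (SOME n. P 0 n) (\<lambda>p prev. SOME n. n \<ge> Suc prev \<and> P (Suc p) n)"
  have f_0: "f 0 = (SOME n. P 0 n)"
    and f_S: "f (Suc p) = (SOME n. n \<ge> Suc (f p) \<and> P (Suc p) n)" for p
    unfolding f_def by simp_all
  have f_Suc: "P (Suc p) (f (Suc p)) \<and> f p < f (Suc p)" for p
    unfolding f_S using someI_ex[OF assms[where p = "Suc p" and N = "Suc (f p)"]] by (simp add: Suc_le_eq)
  have "P 0 (f 0)" unfolding f_0 using someI_ex[OF assms[where p = 0 and N = 0]] by simp
  then have "P p (f p)" for p using f_Suc by (cases p) auto
  moreover have "strict_mono f" using f_Suc by (simp add: strict_mono_Suc_iff)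
  ultimately show ?thesis using that by blast
qed

lemma ex_positions_mod:
  assumes "set L \<subseteq> set xs"
  obtains b where "\<And>i. i < length L \<Longrightarrow> xs ! (b i mod length xs) = L ! i"
    and "\<And>i. i < length L \<Longrightarrow> length xs * (c + i) \<le> b i \<and> b i < length xs * (c + i + 1)"
proof
  define idx where "idx a = (SOME j. j < length xs \<and> xs ! j = a)" for a
  have idx: "idx a < length xs \<and> xs ! idx a = a" if "a \<in> set xs" for a
    unfolding idx_def by (rule someI_ex) (use that in \<open>auto simp: in_set_conv_nth\<close>)
  fix i assume "i < length L"
  then have "idx (L ! i) < length xs \<and> xs ! idx (L ! i) = L ! i" using idx assms nth_mem by blast
  then show "xs ! ((length xs * (c + i) + idx (L ! i)) mod length xs) = L ! i"
    and "length xs * (c + i) \<le> length xs * (c + i) + idx (L ! i) \<and>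
      length xs * (c + i) + idx (L ! i) < length xs * (c + i + 1)"
    by simp_all
qed

context qo_on
begin

lemma below_concat_single:
  assumes "embeds le \<rho> D (snd a) (omega_pow (fst a))"
  shows "below_concat le \<rho> D [a]"
proof -
  have "(\<Union>i<Suc 0. S i) = S 0" for S :: "nat \<Rightarrow> nat multiset set" by auto
  then show ?thesis using assms unfolding below_concat_def by (auto intro: embeds_trans)
qed

lemma below_concat_embeds: "embeds le \<rho> D \<rho>' D' \<Longrightarrow> below_concat le \<rho>' D' L \<Longrightarrow> below_concat le \<rho> D L"
  unfolding below_concat_def by (meson embeds_trans)

context
  fixes xs :: "'q pow_seq list"
  assumes xs_ne: "xs \<noteq> []" and xs_in: "\<forall>s\<in>set xs. seq_in Q s"
begin

lemma embeds_node_fun_into: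
  assumes often: "\<forall>i<length xs. \<forall>N. \<exists>n\<ge>N. embeds le (snd (xs ! i)) (omega_pow (fst (xs ! i))) \<rho> (block k n)"
  shows "embeds le (node_fun xs) (omega_pow (Suc (max_height xs))) \<rho> (omega_pow (Suc k))"
proof -
  obtain f where f: "strict_mono f"
    "\<And>p. embeds le (snd (xs ! part_child xs p)) (omega_pow (fst (xs ! part_child xs p))) \<rho> (block k (f p))"
    using ex_strict_mono_choice[of "\<lambda>p n. embeds le (snd (xs ! part_child xs p))
      (omega_pow (fst (xs ! part_child xs p))) \<rho> (block k n)"] often part_child_less[OF xs_ne]
    by blast
  have ord: "x < y" if "p < p'" "x \<in> block k (f p)" "y \<in> block k (f p')" for p p' x y
    using block_less[OF strict_monoD[OF f(1) that(1)] that(2,3)] .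
  have "(\<Union>p. block k (f p)) \<subseteq> omega_pow (Suc k)" using block_subset_omega_pow_Suc by blast
  with ord f(2) show ?thesis by (rule embeds_node_fun[OF xs_ne xs_in])
qed

lemma below_concat_embeds_node_fun:
  assumes cov: "below_concat le \<rho> D L" and L: "set L \<subseteq> set xs"
  shows "embeds le \<rho> D (node_fun xs)
    (\<Union>b\<in>{length xs * c..<length xs * (c + length L)}. block (max_height xs) b)"
proof -
  define m where "m = length xs"
  obtain b where b_child: "\<And>i. i < length L \<Longrightarrow> xs ! (b i mod m) = L ! i"
    and b: "\<And>i. i < length L \<Longrightarrow> m * (c + i) \<le> b i \<and> b i < m * (c + i + 1)"
    using ex_positions_mod[OF L] unfolding m_def by metis
  have b_less: "b i < b j" if "i < j" "j < length L" for i j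
  proof -
    have "b i < m * (c + i + 1)" using b that by simp
    also have "\<dots> \<le> m * (c + j)" using that(1) by (intro mult_le_mono2) simp
    also have "\<dots> \<le> b j" using b that(2) by simp
    finally show ?thesis .
  qed
  have "embeds le \<rho> D (node_fun xs) (\<Union>i<length L. head_part xs (b i))"
  proof (rule below_concatD[OF cov])
    fix i j x y assume "i < j" "j < length L" "x \<in> head_part xs (b i)" "y \<in> head_part xs (b j)"
    then show "x < y"
      using block_less[OF b_less] head_part_subset_block[OF xs_ne] by (meson subsetD)
  next
    fix i assume "i < length L"
    then show "embeds le (snd (L ! i)) (omega_pow (fst (L ! i))) (node_fun xs) (head_part xs (b i))"
      using embeds_child_head_part[OF xs_ne xs_in refl, of "b i"] b_child unfolding m_def by simp
  qed
  moreover have "(\<Union>i<length L. head_part xs (b i))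
      \<subseteq> (\<Union>b\<in>{m * c..<m * (c + length L)}. block (max_height xs) b)"
  proof (intro UN_least)
    fix i assume "i \<in> {..<length L}"
    then have i: "i < length L" by simp
    have "m * c \<le> m * (c + i)" by (intro mult_le_mono2) simp
    moreover have "m * (c + i + 1) \<le> m * (c + length L)" using i by (intro mult_le_mono2) simp
    ultimately have "m * c \<le> b i" "b i < m * (c + length L)" using b[OF i] by linarith+
    then show "head_part xs (b i) \<subseteq> (\<Union>b\<in>{m * c..<m * (c + length L)}. block (max_height xs) b)"
      using head_part_subset_block[OF xs_ne] by fastforce
  qed
  ultimately show ?thesis unfolding m_def by (rule embeds_mono[OF _ subset_refl])
qed

text \<open>The concatenations for consecutive blocks of \<open>\<rho>\<close> are laid out one after the other along
  the blocks of the node sequence, in which every child recurs periodically.\<close>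

lemma embeds_into_node_fun:
  assumes cov: "\<forall>n\<ge>N\<^sub>0. set (Ls n) \<subseteq> set xs \<and> below_concat le \<rho> (block k n) (Ls n)"
  shows "embeds le \<rho> (\<Union>n\<in>{N\<^sub>0..}. block k n) (node_fun xs) (omega_pow (Suc (max_height xs)))"
proof -
  define m where "m = length xs"
  define off where "off n = (\<Sum>n'<n. length (Ls n'))" for n
  define D where "D n = (if N\<^sub>0 \<le> n then block k n else {})" for n
  define T where "T n = (\<Union>b\<in>{m * off n..<m * off (Suc n)}. block (max_height xs) b)" for n
  have off_Suc: "off (Suc n) = off n + length (Ls n)" for n by (simp add: off_def)
  have emb: "embeds le \<rho> (D n) (node_fun xs) (T n)" for n
  proof (cases "N\<^sub>0 \<le> n")
    case True
    then show ?thesis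
      using cov below_concat_embeds_node_fun[of \<rho> "block k n" "Ls n" "off n"]
      unfolding D_def T_def off_Suc m_def by simp
  qed (simp add: D_def)
  have D_ord: "x < y" if "n < n'" "x \<in> D n" "y \<in> D n'" for n n' x y
    using that block_less unfolding D_def by (auto split: if_splits)
  have T_ord: "x < y" if n: "n < n'" and xy: "x \<in> T n" "y \<in> T n'" for n n' x y
  proof -
    obtain b b' where b: "b < m * off (Suc n)" "x \<in> block (max_height xs) b"
      and b': "m * off n' \<le> b'" "y \<in> block (max_height xs) b'"
      using xy unfolding T_def by auto
    have "off (Suc n) \<le> off n'" unfolding off_def using n by (intro sum_mono2) auto
    then have "m * off (Suc n) \<le> m * off n'" by simp
    then have "b < b'" using b(1) b'(1) by linarith
    then show ?thesis using block_less b(2) b'(2) by blast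
  qed
  have "embeds le \<rho> (\<Union>n. D n) (node_fun xs) (\<Union>n. T n)"
    using D_ord T_ord emb by (rule embeds_UN)
  moreover have "(\<Union>n. D n) = (\<Union>n\<in>{N\<^sub>0..}. block k n)" by (auto simp: D_def split: if_splits)
  moreover have "(\<Union>n. T n) \<subseteq> omega_pow (Suc (max_height xs))"
    unfolding T_def using block_subset_omega_pow_Suc by blast
  ultimately show ?thesis by (simp add: embeds_mono)
qed

end

end

lemma eventually_subset_recurrent:
  fixes A :: "nat \<Rightarrow> 'a set"
  assumes "finite (\<Union>n. A n)"
  shows "\<exists>N. \<forall>n\<ge>N. A n \<subseteq> {u. infinite {n. u \<in> A n}}"
proof
  define Bad where "Bad = (\<Union>u\<in>(\<Union>n. A n) - {u. infinite {n. u \<in> A n}}. {n. u \<in> A n})"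
  have "finite Bad" unfolding Bad_def using assms by auto
  show "\<forall>n\<ge>Suc (Max Bad). A n \<subseteq> {u. infinite {n. u \<in> A n}}"
  proof (intro allI impI)
    fix n assume "Suc (Max Bad) \<le> n"
    then have "n \<notin> Bad" using Max_ge[OF \<open>finite Bad\<close>] by fastforce
    then show "A n \<subseteq> {u. infinite {n. u \<in> A n}}" unfolding Bad_def by blast
  qed
qed

context qo_on
begin

definition tree_cover :: "'q set \<Rightarrow> nat \<Rightarrow> (nat multiset \<Rightarrow> 'q) \<Rightarrow> nat multiset set \<Rightarrow> 'q tree list \<Rightarrow> bool"
  where "tree_cover R h \<rho> D L \<longleftrightarrow> L \<noteq> [] \<and> set L \<subseteq> trees_upto h R \<and>
    (\<forall>u\<in>set L. embeds le (snd (seq_of_tree u)) (omega_pow (fst (seq_of_tree u))) \<rho> D) \<and>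
    below_concat le \<rho> D (map seq_of_tree L)"

lemma tree_cover_block:
  assumes in_Q: "\<rho> ` omega_pow (Suc h) \<subseteq> Q"
    and cover: "tree_cover R h (\<lambda>r. \<rho> (shift n h r)) (omega_pow h) L"
  shows "tree_cover R h \<rho> (block h n) L"
proof -
  have "(\<lambda>r. \<rho> (shift n h r)) ` omega_pow h \<subseteq> Q" using in_Q shift_in_omega_pow_Suc by blast
  then have to_block: "embeds le (\<lambda>r. \<rho> (shift n h r)) (omega_pow h) \<rho> (block h n)"
    and from_block: "embeds le \<rho> (block h n) (\<lambda>r. \<rho> (shift n h r)) (omega_pow h)"
    using le_refl unfolding block_def
    by (auto intro!: embedsI[OF strict_mono_on_shift] embeds_inv_image[OF strict_mono_on_shift])
  show ?thesis
    using cover embeds_trans[OF _ to_block] below_concat_embeds[OF from_block]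
    unfolding tree_cover_def by blast
qed

text \<open>The children of the tree for a sequence of length \<open>\<omega>^(h+1)\<close> are the trees that occur in
  the covers of infinitely many of its blocks; there are finitely many candidates.\<close>

lemma tree_from_block_covers:
  assumes "finite R" "R \<subseteq> Q" and in_Q: "\<rho> ` omega_pow (Suc h) \<subseteq> Q"
    and covers: "\<And>n. tree_cover R h \<rho> (block h n) (Ls n)"
  obtains t N where "t \<in> trees_upto (Suc h) R" "pseq_le (seq_of_tree t) (Suc h, \<rho>)"
    "embeds le \<rho> (\<Union>n\<in>{N..}. block h n) (snd (seq_of_tree t)) (omega_pow (fst (seq_of_tree t)))"
proof -
  have "(\<Union>n. set (Ls n)) \<subseteq> trees_upto h R" using covers unfolding tree_cover_def by blast
  then have "finite (\<Union>n. set (Ls n))" using finite_trees_upto[OF \<open>finite R\<close>] finite_subset by blast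
  define U where "U = {u. infinite {n. u \<in> set (Ls n)}}"
  obtain N where N: "\<forall>n\<ge>N. set (Ls n) \<subseteq> U"
    using eventually_subset_recurrent[OF \<open>finite (\<Union>n. set (Ls n))\<close>] unfolding U_def ..
  have U_sub: "U \<subseteq> trees_upto h R"
    using covers unfolding U_def tree_cover_def by (fastforce dest: not_finite_existsD)
  have "Ls N \<noteq> []" using covers unfolding tree_cover_def by blast
  moreover have "set (Ls N) \<subseteq> U" using N by simp
  ultimately have "U \<noteq> {}" by auto
  define ts where "ts = Abs_fset U"
  have ts: "fset ts = U" unfolding ts_def
    using finite_subset[OF U_sub finite_trees_upto[OF \<open>finite R\<close>]] by (simp add: Abs_fset_inverse)
  define xs where "xs = child_seqs ts"
  have set_xs: "set xs = seq_of_tree ` U" unfolding xs_def set_child_seqs ts ..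
  have t: "Node ts \<in> trees_upto (Suc h) R" using \<open>U \<noteq> {}\<close> U_sub ts by auto
  then have "tree_in Q (Node ts)" using tree_in_trees_upto tree_in_mono \<open>R \<subseteq> Q\<close> by blast
  then have xs: "xs \<noteq> []" "\<forall>s\<in>set xs. seq_in Q s" unfolding xs_def by (rule child_seqs_props)+
  have "\<forall>i<length xs. \<forall>M. \<exists>n\<ge>M. embeds le (snd (xs ! i)) (omega_pow (fst (xs ! i))) \<rho> (block h n)"
  proof (intro allI impI)
    fix i M assume "i < length xs"
    then obtain u where u: "u \<in> U" "xs ! i = seq_of_tree u" using set_xs nth_mem by (metis imageE)
    then obtain n where "M \<le> n" "u \<in> set (Ls n)"
      unfolding U_def by (metis infinite_nat_iff_unbounded_le mem_Collect_eq)
    then show "\<exists>n\<ge>M. embeds le (snd (xs ! i)) (omega_pow (fst (xs ! i))) \<rho> (block h n)"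
      using covers u(2) unfolding tree_cover_def by metis
  qed
  then have "pseq_le (seq_of_tree (Node ts)) (Suc h, \<rho>)"
    unfolding seq_of_tree_Node node_seq_def xs_def[symmetric] using embeds_node_fun_into[OF xs] by simp
  moreover have "embeds le \<rho> (\<Union>n\<in>{N..}. block h n) (node_fun xs) (omega_pow (Suc (max_height xs)))"
    using N covers set_xs unfolding tree_cover_def U_def
    by (intro embeds_into_node_fun[OF xs, where Ls = "\<lambda>n. map seq_of_tree (Ls n)"]) auto
  ultimately show ?thesis using that[OF t] unfolding xs_def by (simp add: node_seq_def)
qed

lemma tree_cover_concat:
  assumes covers: "\<And>n. tree_cover R h \<rho> (block h n) (Ls n)"
    and t: "t \<in> trees_upto (Suc h) R" "pseq_le (seq_of_tree t) (Suc h, \<rho>)"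
    and tail: "embeds le \<rho> (\<Union>n\<in>{N..}. block h n) (snd (seq_of_tree t)) (omega_pow (fst (seq_of_tree t)))"
  shows "tree_cover R (Suc h) \<rho> (omega_pow (Suc h)) (concat (map Ls [0..<N]) @ [t])"
proof -
  have "below_concat le \<rho> (\<Union>n<N. block h n) (concat (map (\<lambda>n. map seq_of_tree (Ls n)) [0..<N]))"
    using covers unfolding tree_cover_def by (intro below_concat_concat) simp
  then have "below_concat le \<rho> (\<Union>n<N. block h n) (map seq_of_tree (concat (map Ls [0..<N])))"
    by (simp add: map_concat comp_def)
  moreover have "below_concat le \<rho> (\<Union>n\<in>{N..}. block h n) [seq_of_tree t]"
    using tail by (rule below_concat_single)
  moreover have "x < y" if xy: "x \<in> (\<Union>n<N. block h n)" "y \<in> (\<Union>n\<in>{N..}. block h n)" for x y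
  proof -
    obtain n n' where "n < N" "x \<in> block h n" "N \<le> n'" "y \<in> block h n'" using xy by blast
    then show ?thesis using block_less[of n n'] by simp
  qed
  ultimately have "below_concat le \<rho> ((\<Union>n<N. block h n) \<union> (\<Union>n\<in>{N..}. block h n))
      (map seq_of_tree (concat (map Ls [0..<N])) @ [seq_of_tree t])"
    by (rule below_concat_append)
  moreover have "(\<Union>n<N. block h n) \<union> (\<Union>n\<in>{N..}. block h n) = omega_pow (Suc h)"
  proof -
    have "{..<N} \<union> {N..} = (UNIV :: nat set)" by auto
    then show ?thesis unfolding omega_pow_Suc_eq_UN_block UN_Un[symmetric] by simp
  qed
  moreover have "set (concat (map Ls [0..<N])) \<subseteq> trees_upto (Suc h) R"
    using covers unfolding tree_cover_def by auto
  moreover have "embeds le (snd (seq_of_tree u)) (omega_pow (fst (seq_of_tree u))) \<rho> (omega_pow (Suc h))"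
    if "u \<in> set (concat (map Ls [0..<N]))" for u
    using that covers block_subset_omega_pow_Suc unfolding tree_cover_def by (fastforce elim: embeds_mono)
  ultimately show ?thesis using t unfolding tree_cover_def by auto
qed

lemma ex_tree_cover:
  assumes "finite R" "R \<subseteq> Q" and "\<rho> ` omega_pow h \<subseteq> R"
  shows "\<exists>L. tree_cover R h \<rho> (omega_pow h) L"
  using assms(3)
proof (induction h arbitrary: \<rho>)
  case 0
  then have "\<rho> {#} \<in> R" by (simp add: omega_pow_0)
  then have "le (\<rho> {#}) (\<rho> {#})" using \<open>R \<subseteq> Q\<close> le_refl by blast
  then have "tree_cover R 0 \<rho> (omega_pow 0) [Leaf (\<rho> {#})]"
    using \<open>\<rho> {#} \<in> R\<close> unfolding tree_cover_def
    by (auto simp: embeds_omega_pow_0_iff intro: below_concat_single)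
  then show ?case by blast
next
  case (Suc h)
  have in_Q: "\<rho> ` omega_pow (Suc h) \<subseteq> Q" using Suc.prems \<open>R \<subseteq> Q\<close> by blast
  have "\<exists>L. tree_cover R h \<rho> (block h n) L" for n
    using Suc.IH[of "\<lambda>r. \<rho> (shift n h r)"] Suc.prems shift_in_omega_pow_Suc tree_cover_block[OF in_Q]
    by blast
  then obtain Ls where covers: "\<And>n. tree_cover R h \<rho> (block h n) (Ls n)" by metis
  obtain t N where t: "t \<in> trees_upto (Suc h) R" "pseq_le (seq_of_tree t) (Suc h, \<rho>)"
    and tail: "embeds le \<rho> (\<Union>n\<in>{N..}. block h n) (snd (seq_of_tree t)) (omega_pow (fst (seq_of_tree t)))"
    using tree_from_block_covers[OF assms(1,2) in_Q covers] .
  show ?case using tree_cover_concat[OF covers t tail] by blast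
qed

lemma ex_tree_equiv:
  assumes in_Q: "\<rho> ` omega_pow k \<subseteq> Q" and fin: "finite (\<rho> ` omega_pow k)"
    and ind: "indecomposable le ({#k#}, \<rho>)"
  obtains t where "tree_in Q t" "pseq_le (seq_of_tree t) (k, \<rho>)" "pseq_le (k, \<rho>) (seq_of_tree t)"
proof (cases k)
  case 0
  then have "tree_in Q (Leaf (\<rho> {#}))" "le (\<rho> {#}) (\<rho> {#})"
    using in_Q le_refl by (auto simp: omega_pow_0 tree_in_Leaf)
  then show ?thesis using that 0 by (simp add: embeds_omega_pow_0_iff)
next
  case (Suc h)
  define R where "R = \<rho> ` omega_pow k"
  have R: "finite R" "R \<subseteq> Q" using fin in_Q unfolding R_def by auto
  have "\<exists>L. tree_cover R h \<rho> (block h n) L" for n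
    using ex_tree_cover[OF R, of "\<lambda>r. \<rho> (shift n h r)"] shift_in_omega_pow_Suc
      tree_cover_block[OF in_Q[unfolded Suc]] unfolding R_def Suc by blast
  then obtain Ls where "\<And>n. tree_cover R h \<rho> (block h n) (Ls n)" by metis
  then obtain t N where t: "t \<in> trees_upto (Suc h) R" "pseq_le (seq_of_tree t) (Suc h, \<rho>)"
    and tail: "embeds le \<rho> (\<Union>n\<in>{N..}. block h n) (snd (seq_of_tree t)) (omega_pow (fst (seq_of_tree t)))"
    using tree_from_block_covers[OF R in_Q[unfolded Suc]] by blast
  have "embeds le \<rho> (omega_pow (Suc h)) \<rho> (\<Union>n\<in>{N..}. block h n)"
    using ind in_Q unfolding Suc by (rule indecomposable_embeds_blocks_from)
  then have "pseq_le (Suc h, \<rho>) (seq_of_tree t)" using tail by (simp add: embeds_trans)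
  moreover have "tree_in Q t" using tree_in_trees_upto[OF t(1)] tree_in_mono R(2) by blast
  ultimately show ?thesis using that t(2) Suc by blast
qed

end

section \<open>The equivalence\<close>

text \<open>The restriction makes the function extensional, as \<^const>\<open>iF\<close> requires.\<close>

definition tseq_of :: "'q pow_seq \<Rightarrow> 'q tseq" where
  "tseq_of s = ({#fst s#}, restrict (snd s) (omega_pow (fst s)))"

lemma seq_len_tseq_of [simp]: "seq_len (tseq_of s) = {#fst s#}"
  by (simp add: tseq_of_def seq_len_def)

lemma seq_le_tseq_of_iff:
  "seq_le le (tseq_of a) (tseq_of b) \<longleftrightarrow> embeds le (snd a) (omega_pow (fst a)) (snd b) (omega_pow (fst b))"
proof -
  have "seq_le le (tseq_of a) (tseq_of b) \<longleftrightarrow>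
      embeds le (seq_fun (tseq_of a)) (omega_pow (fst a)) (seq_fun (tseq_of b)) (omega_pow (fst b))"
    unfolding seq_le_def embeds_def seq_len_tseq_of lessThan_single_mset ..
  also have "\<dots> \<longleftrightarrow> embeds le (snd a) (omega_pow (fst a)) (snd b) (omega_pow (fst b))"
    by (rule embeds_cong) (simp_all add: tseq_of_def seq_fun_def)
  finally show ?thesis .
qed

lemma indecomposable_tseq_of_iff: "indecomposable le (tseq_of s) \<longleftrightarrow> indecomposable le ({#fst s#}, snd s)"
proof -
  have "embeds le (restrict (snd s) (omega_pow (fst s))) (omega_pow (fst s))
      (restrict (snd s) (omega_pow (fst s))) {x \<in> omega_pow (fst s). d \<le> x} \<longleftrightarrow>
    embeds le (snd s) (omega_pow (fst s)) (snd s) {x \<in> omega_pow (fst s). d \<le> x}" for d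
    by (rule embeds_cong) simp_all
  then show ?thesis unfolding tseq_of_def indecomposable_single_iff by simp
qed

lemma iF_eq_tseq_of:
  assumes "a \<in> iF Q le"
  obtains k where "a = tseq_of (k, seq_fun a)" "seq_fun a ` omega_pow k \<subseteq> Q"
    "finite (seq_fun a ` omega_pow k)" "indecomposable le ({#k#}, seq_fun a)"
proof -
  have a: "a = (seq_len a, seq_fun a)" by (simp add: seq_len_def seq_fun_def)
  then have ind: "indecomposable le (seq_len a, seq_fun a)" using assms unfolding iF_def by simp
  then obtain k where k: "seq_len a = {#k#}" using indecomposable_length_single assms unfolding iF_def by blast
  then have "seq_fun a \<in> omega_pow k \<rightarrow>\<^sub>E Q" using assms unfolding iF_def by (simp add: lessThan_single_mset)
  then have "a = tseq_of (k, seq_fun a)" using a k by (simp add: tseq_of_def restrict_ext PiE_restrict)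
  moreover have "seq_fun a ` omega_pow k \<subseteq> Q" "finite (seq_fun a ` omega_pow k)"
    using \<open>seq_fun a \<in> omega_pow k \<rightarrow>\<^sub>E Q\<close> assms k unfolding iF_def by (auto simp: lessThan_single_mset)
  ultimately show ?thesis using that ind k by simp
qed

definition tree_seq_equivalence ::
    "'q set \<Rightarrow> ('q \<Rightarrow> 'q \<Rightarrow> bool) \<Rightarrow> ('q tree \<Rightarrow> 'q tseq) \<Rightarrow> ('q tseq \<Rightarrow> 'q tree) \<Rightarrow> bool" where
  "tree_seq_equivalence Q le f g \<longleftrightarrow> f \<in> Tf Q \<rightarrow> iF Q le \<and> g \<in> iF Q le \<rightarrow> Tf Q \<and>
     (\<forall>s\<in>Tf Q. \<forall>t\<in>Tf Q. tree_le le s t \<longleftrightarrow> seq_le le (f s) (f t)) \<and>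
     (\<forall>a\<in>iF Q le. \<forall>b\<in>iF Q le. seq_le le a b \<longleftrightarrow> tree_le le (g a) (g b)) \<and>
     (\<forall>t\<in>Tf Q. tree_le le (g (f t)) t \<and> tree_le le t (g (f t))) \<and>
     (\<forall>a\<in>iF Q le. seq_le le (f (g a)) a \<and> seq_le le a (f (g a)))"

context qo_on
begin

lemma tseq_of_tree_in_iF: "tree_in Q t \<Longrightarrow> tseq_of (seq_of_tree t) \<in> iF Q le"
  using seq_in_seq_of_tree[of t] seq_of_tree_range[of Q t] finite_labels[of t] indecomposable_seq_of_tree[of t]
  unfolding iF_def seq_in_def tseq_of_def
  by (auto simp: seq_len_def seq_fun_def lessThan_single_mset indecomposable_tseq_of_iff[unfolded tseq_of_def]
      intro: finite_subset)

lemma tree_le_iff_seq_le: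
  "tree_in Q s \<Longrightarrow> tree_in Q t \<Longrightarrow> tree_le le s t \<longleftrightarrow> seq_le le (tseq_of (seq_of_tree s)) (tseq_of (seq_of_tree t))"
  unfolding seq_le_tseq_of_iff using tree_le_imp_pseq_le pseq_le_imp_tree_le by blast

lemma trees_equiv_sequences: "\<exists>f g. tree_seq_equivalence Q le f g"
proof -
  define f :: "'q tree \<Rightarrow> 'q tseq" where "f t = tseq_of (seq_of_tree t)" for t
  have equiv: "\<exists>t. tree_in Q t \<and> seq_le le (f t) a \<and> seq_le le a (f t)" if a: "a \<in> iF Q le" for a
  proof -
    obtain k where k: "a = tseq_of (k, seq_fun a)" "seq_fun a ` omega_pow k \<subseteq> Q"
      "finite (seq_fun a ` omega_pow k)" "indecomposable le ({#k#}, seq_fun a)"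
      using iF_eq_tseq_of[OF a] .
    obtain t where "tree_in Q t" "pseq_le (seq_of_tree t) (k, seq_fun a)" "pseq_le (k, seq_fun a) (seq_of_tree t)"
      using ex_tree_equiv[OF k(2-4)] .
    then show ?thesis unfolding f_def by (subst (1 2) k(1)) (auto simp: seq_le_tseq_of_iff)
  qed
  define g where "g a = (SOME t. tree_in Q t \<and> seq_le le (f t) a \<and> seq_le le a (f t))" for a
  have g: "tree_in Q (g a) \<and> seq_le le (f (g a)) a \<and> seq_le le a (f (g a))" if "a \<in> iF Q le" for a
    unfolding g_def by (rule someI_ex[OF equiv[OF that]])
  have f_iff: "tree_le le s t \<longleftrightarrow> seq_le le (f s) (f t)" if "tree_in Q s" "tree_in Q t" for s t
    unfolding f_def using tree_le_iff_seq_le[OF that] .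
  have seq_le_trans: "seq_le le a c" if "seq_le le a b" "seq_le le b c" for a b c
    using that unfolding seq_le_eq_embeds by (rule embeds_trans)
  show ?thesis unfolding tree_seq_equivalence_def
  proof (intro exI[of _ f] exI[of _ g] conjI ballI)
    show "f \<in> Tf Q \<rightarrow> iF Q le" "g \<in> iF Q le \<rightarrow> Tf Q"
      using tseq_of_tree_in_iF g unfolding f_def Tf_def by auto
    show "tree_le le s t \<longleftrightarrow> seq_le le (f s) (f t)" if "s \<in> Tf Q" "t \<in> Tf Q" for s t
      using f_iff that unfolding Tf_def by blast
    show "seq_le le a b \<longleftrightarrow> tree_le le (g a) (g b)" if "a \<in> iF Q le" "b \<in> iF Q le" for a b
      using g[OF that(1)] g[OF that(2)] f_iff seq_le_trans by meson
    show "tree_le le (g (f t)) t" "tree_le le t (g (f t))" if "t \<in> Tf Q" for t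
      using that g[OF tseq_of_tree_in_iF] f_iff unfolding Tf_def f_def by auto
    show "seq_le le (f (g a)) a" "seq_le le a (f (g a))" if "a \<in> iF Q le" for a
      using g[OF that] by auto
  qed
qed

end

lemma tree_le_mono:
  assumes "tree_le le s t" and "\<And>x y. le x y \<Longrightarrow> le' x y"
  shows "tree_le le' s t"
  using assms by (induction rule: tree_le.induct) (auto intro!: tree_le.intros)

lemma tree_le_restrict:
  "tree_le le s t \<Longrightarrow> tree_in Q s \<Longrightarrow> tree_in Q t \<Longrightarrow> tree_le (\<lambda>x y. x \<in> Q \<and> y \<in> Q \<and> le x y) s t"
proof (induction rule: tree_le.induct)
  case (leaf_leaf x y)
  then show ?case by (auto simp: tree_in_Leaf intro: tree_le.intros)
next
  case (leaf_node t ts x)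
  then show ?case by (auto simp: tree_in_Node intro: tree_le.intros)
next
  case (node_node ss ts)
  have "\<exists>t. t |\<in>| ts \<and> tree_le (\<lambda>x y. x \<in> Q \<and> y \<in> Q \<and> le x y) s t" if "s |\<in>| ss" for s
  proof -
    obtain t where "t |\<in>| ts" "tree_in Q s \<Longrightarrow> tree_in Q t \<Longrightarrow> tree_le (\<lambda>x y. x \<in> Q \<and> y \<in> Q \<and> le x y) s t"
      using node_node(1) \<open>s |\<in>| ss\<close> by blast
    moreover have "tree_in Q s" using node_node(2) \<open>s |\<in>| ss\<close> by (simp add: tree_in_Node)
    moreover have "tree_in Q t" using node_node(3) \<open>t |\<in>| ts\<close> by (simp add: tree_in_Node)
    ultimately show ?thesis by blast
  qed
  then show ?case by (blast intro: tree_le.node_node)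
qed

lemma seq_le_restrict_iff:
  assumes "seq_fun a ` {..<seq_len a} \<subseteq> Q" "seq_fun b ` {..<seq_len b} \<subseteq> Q"
  shows "seq_le (\<lambda>x y. x \<in> Q \<and> y \<in> Q \<and> le x y) a b \<longleftrightarrow> seq_le le a b"
  unfolding seq_le_eq_embeds by (rule embeds_rel_cong[OF _ assms]) simp

lemma iF_restrict: "iF Q (\<lambda>x y. x \<in> Q \<and> y \<in> Q \<and> le x y) = iF Q le"
proof -
  have "indecomposable (\<lambda>x y. x \<in> Q \<and> y \<in> Q \<and> le x y) a \<longleftrightarrow> indecomposable le a"
    if Q: "seq_fun a ` {..<seq_len a} \<subseteq> Q" for a :: "'a tseq"
  proof -
    have "embeds (\<lambda>x y. x \<in> Q \<and> y \<in> Q \<and> le x y) (seq_fun a) {..<seq_len a} (seq_fun a) {d..<seq_len a}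
        \<longleftrightarrow> embeds le (seq_fun a) {..<seq_len a} (seq_fun a) {d..<seq_len a}" for d
      using Q by (intro embeds_rel_cong) auto
    then show ?thesis unfolding indecomposable_eq_embeds by simp
  qed
  then show ?thesis unfolding iF_def by (auto simp: PiE_iff image_subset_iff)
qed

lemma iF_values: "a \<in> iF Q le \<Longrightarrow> seq_fun a ` {..<seq_len a} \<subseteq> Q"
  unfolding iF_def by (auto simp: PiE_iff)

lemma tree_seq_equivalence_restrict_iff:
  "tree_seq_equivalence Q (\<lambda>x y. x \<in> Q \<and> y \<in> Q \<and> le x y) f g \<longleftrightarrow> tree_seq_equivalence Q le f g"
proof -
  have tree: "tree_le (\<lambda>x y. x \<in> Q \<and> y \<in> Q \<and> le x y) s t \<longleftrightarrow> tree_le le s t"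
    if "s \<in> Tf Q" "t \<in> Tf Q" for s t
    using that tree_le_restrict tree_le_mono[of "\<lambda>x y. x \<in> Q \<and> y \<in> Q \<and> le x y" s t le]
    unfolding Tf_def by blast
  have seq: "seq_le (\<lambda>x y. x \<in> Q \<and> y \<in> Q \<and> le x y) a b \<longleftrightarrow> seq_le le a b"
    if "a \<in> iF Q le" "b \<in> iF Q le" for a b
    using that by (intro seq_le_restrict_iff iF_values)
  show ?thesis
    unfolding tree_seq_equivalence_def iF_restrict
  proof (intro conj_cong refl)
    assume f_in: "f \<in> Tf Q \<rightarrow> iF Q le" and g_in: "g \<in> iF Q le \<rightarrow> Tf Q"
    have f: "f t \<in> iF Q le" if "t \<in> Tf Q" for t using f_in that by auto
    have g: "g a \<in> Tf Q" if "a \<in> iF Q le" for a using g_in that by auto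
    show "(\<forall>s\<in>Tf Q. \<forall>t\<in>Tf Q. tree_le (\<lambda>x y. x \<in> Q \<and> y \<in> Q \<and> le x y) s t \<longleftrightarrow>
        seq_le (\<lambda>x y. x \<in> Q \<and> y \<in> Q \<and> le x y) (f s) (f t)) \<longleftrightarrow>
      (\<forall>s\<in>Tf Q. \<forall>t\<in>Tf Q. tree_le le s t \<longleftrightarrow> seq_le le (f s) (f t))"
      by (simp add: tree seq f)
    show "(\<forall>a\<in>iF Q le. \<forall>b\<in>iF Q le. seq_le (\<lambda>x y. x \<in> Q \<and> y \<in> Q \<and> le x y) a b \<longleftrightarrow>
        tree_le (\<lambda>x y. x \<in> Q \<and> y \<in> Q \<and> le x y) (g a) (g b)) \<longleftrightarrow>
      (\<forall>a\<in>iF Q le. \<forall>b\<in>iF Q le. seq_le le a b \<longleftrightarrow> tree_le le (g a) (g b))"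
      by (simp add: tree seq g)
    show "(\<forall>t\<in>Tf Q. tree_le (\<lambda>x y. x \<in> Q \<and> y \<in> Q \<and> le x y) (g (f t)) t \<and>
        tree_le (\<lambda>x y. x \<in> Q \<and> y \<in> Q \<and> le x y) t (g (f t))) \<longleftrightarrow>
      (\<forall>t\<in>Tf Q. tree_le le (g (f t)) t \<and> tree_le le t (g (f t)))"
      by (simp add: tree f g)
    show "(\<forall>a\<in>iF Q le. seq_le (\<lambda>x y. x \<in> Q \<and> y \<in> Q \<and> le x y) (f (g a)) a \<and>
        seq_le (\<lambda>x y. x \<in> Q \<and> y \<in> Q \<and> le x y) a (f (g a))) \<longleftrightarrow>
      (\<forall>a\<in>iF Q le. seq_le le (f (g a)) a \<and> seq_le le a (f (g a)))"
      by (simp add: seq f g)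
  qed
qed

lemma qo_on_restrict:
  assumes "\<forall>x\<in>Q. le x x" and "\<forall>x\<in>Q. \<forall>y\<in>Q. \<forall>z\<in>Q. le x y \<longrightarrow> le y z \<longrightarrow> le x z"
  shows "qo_on Q (\<lambda>x y. x \<in> Q \<and> y \<in> Q \<and> le x y)"
  using assms by unfold_locales blast+

theorem theorem4p26:
  fixes Q :: "'q set" and le :: "'q \<Rightarrow> 'q \<Rightarrow> bool"
  assumes nonempty: "Q \<noteq> {}"
    and refl: "\<forall>x\<in>Q. le x x"
    and trans: "\<forall>x\<in>Q. \<forall>y\<in>Q. \<forall>z\<in>Q. le x y \<longrightarrow> le y z \<longrightarrow> le x z"
  shows "\<exists>f g. f \<in> Tf Q \<rightarrow> iF Q le \<and> g \<in> iF Q le \<rightarrow> Tf Q \<and>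
           (\<forall>s\<in>Tf Q. \<forall>t\<in>Tf Q. tree_le le s t \<longleftrightarrow> seq_le le (f s) (f t)) \<and>
           (\<forall>a\<in>iF Q le. \<forall>b\<in>iF Q le. seq_le le a b \<longleftrightarrow> tree_le le (g a) (g b)) \<and>
           (\<forall>t\<in>Tf Q. tree_le le (g (f t)) t \<and> tree_le le t (g (f t))) \<and>
           (\<forall>a\<in>iF Q le. seq_le le (f (g a)) a \<and> seq_le le a (f (g a)))"
proof -
  interpret qo_on Q "\<lambda>x y. x \<in> Q \<and> y \<in> Q \<and> le x y"
    using refl trans by (rule qo_on_restrict)
  obtain f g where "tree_seq_equivalence Q (\<lambda>x y. x \<in> Q \<and> y \<in> Q \<and> le x y) f g"
    using trees_equiv_sequences by blast
  then show ?thesis unfolding tree_seq_equivalence_restrict_iff tree_seq_equivalence_def by blast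
qed

end
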